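(* Let $\mathfrak g$ be a Lie algebra and $r\in\wedge^2\mathfrak g$ a skew-symmetric $r$-matrix. For $k\ge0$ define $\Psi:\wedge^{k+1}\mathfrak g\to\mathrm{Hom}(\wedge^k\mathfrak g^*,\mathfrak g)$ by $\langle\Psi(P)(\xi_1,\dots,\xi_k),\xi_{k+1}\rangle=\langle P,\xi_1\wedge\cdots\wedge\xi_{k+1}\rangle$. Then for all $P\in\wedge^{p+1}\mathfrak g$ and $Q\in\wedge^{q+1}\mathfrak g$, $$\Psi([P,Q])=(-1)^{pq}[\![\Psi(P),\Psi(Q)]\!],\qquad \Psi([r,P])=(-1)^p[\![r^\sharp,\Psi(P)]\!].$$
   Context: $[\cdot,\cdot]$ on $\wedge^\bullet\mathfrak g=\bigoplus_k\wedge^{k+1}\mathfrak g$ (elements of $\wedge^{k+1}\mathfrak g$ of degree $k$) is the Gerstenhaber bracket $[x_1\wedge\cdots\wedge x_p,y_1\wedge\cdots\wedge y_q]=\sum_{i,j}(-1)^{i+j}[x_i,y_j]\wedge x_1\wedge\cdots\widehat{x_i}\cdots\wedge x_p\wedge y_1\wedge\cdots\widehat{y_j}\cdots\wedge y_q$. A skew-symmetric $r$-matrix is $r\in\wedge^2\mathfrak g$ with $[r,r]=0$, and $r^\sharp=\Psi(r):\mathfrak g^*\to\mathfrak g$, $\langle r^\sharp\xi,\eta\rangle=\langle r,\xi\wedge\eta\rangle$. The pairing between $\wedge^k\mathfrak g$ and $\wedge^k\mathfrak g^*$ is the natural one. The bracket $[\![\cdot,\cdot]\!]$ on $\bigoplus_k\mathrm{Hom}(\wedge^k\mathfrak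 g^*,\mathfrak g)$ is associated with the coadjoint representation $\rho=\mathrm{ad}^*$, $\langle\mathrm{ad}^*_x\xi,y\rangle=-\langle\xi,[x,y]\rangle$, by the formula $[\![P,Q]\!](u_1,\dots,u_{m+n})=\sum_{\sigma\in\mathbb S_{(m,1,n-1)}}(-1)^{\sigma}P(\rho(Q(u_{\sigma(1)},\dots,u_{\sigma(m)}))u_{\sigma(m+1)},u_{\sigma(m+2)},\dots,u_{\sigma(m+n)})-(-1)^{mn}\sum_{\sigma\in\mathbb S_{(n,1,m-1)}}(-1)^{\sigma}Q(\rho(P(u_{\sigma(1)},\dots,u_{\sigma(n)}))u_{\sigma(n+1)},u_{\sigma(n+2)},\dots,u_{\sigma(m+n)})+(-1)^{mn}\sum_{\sigma\in\mathbb S_{(n,m)}}(-1)^{\sigma}[P(u_{\sigma(1)},\dots,u_{\sigma(n)}),Q(u_{\sigma(n+1)},\dots,u_{\sigma(m+n)})]$ for $P\in\mathrm{Hom}(\wedge^n\mathfrak g^*,\mathfrak g)$, $Q\in\mathrm{Hom}(\wedge^m\mathfrak g^*,\mathfrak g)$, $u_i\in\mathfrak g^*$; $\mathbb S_{(i_1,\dots,i_k)}$ denotes unshuffles. *)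

theory Defs
  imports Complex_Main "HOL-Combinatorics.Permutations"
begin

definition lie_algebra :: "('k::field \<Rightarrow> 'g::ab_group_add \<Rightarrow> 'g) \<Rightarrow> ('g \<Rightarrow> 'g \<Rightarrow> 'g) \<Rightarrow> bool" where
  "lie_algebra scale br \<longleftrightarrow>
     vector_space scale \<and>
     (\<forall>x. Vector_Spaces.linear scale scale (br x)) \<and>
     (\<forall>y. Vector_Spaces.linear scale scale (\<lambda>x. br x y)) \<and>
     (\<forall>x. br x x = 0) \<and>
     (\<forall>x y z. br x (br y z) + br y (br z x) + br z (br x y) = 0)"

definition dual_elem :: "('k::field \<Rightarrow> 'g::ab_group_add \<Rightarrow> 'g) \<Rightarrow> ('g \<Rightarrow> 'k) \<Rightarrow> bool" where
  "dual_elem scale u \<longleftrightarrow> Vector_Spaces.linear scale (*) u"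

text \<open>Multivectors: an element of wedge^k g is given as a finite formal linear
  combination of decomposables x_1 \<and> ... \<and> x_k, each represented by the list [x_1,...,x_k].\<close>
type_synonym ('k, 'g) mvec = "('k \<times> 'g list) list"

definition is_mvec :: "nat \<Rightarrow> ('k, 'g) mvec \<Rightarrow> bool" where
  "is_mvec k P \<longleftrightarrow> (\<forall>t\<in>set P. length (snd t) = k)"

definition det_pair :: "'g list \<Rightarrow> ('g \<Rightarrow> 'k::field) list \<Rightarrow> 'k" where
  "det_pair xs us =
     (if length xs = length us then
        (\<Sum>\<sigma> | \<sigma> permutes {..<length us}.
            of_int (sign \<sigma>) * (\<Prod>i<length us. (us ! i) (xs ! \<sigma> i)))
      else 0)"

definition pair :: "('k::field, 'g) mvec \<Rightarrow> ('g \<Rightarrow> 'k) list \<Rightarrow> 'k" where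
  "pair P us = (\<Sum>t\<leftarrow>P. fst t * det_pair (snd t) us)"

definition mvec_zero :: "('k::field \<Rightarrow> 'g::ab_group_add \<Rightarrow> 'g) \<Rightarrow> nat \<Rightarrow> ('k, 'g) mvec \<Rightarrow> bool" where
  "mvec_zero scale k P \<longleftrightarrow>
     (\<forall>us. length us = k \<longrightarrow> (\<forall>u\<in>set us. dual_elem scale u) \<longrightarrow> pair P us = 0)"

definition Psi :: "('k::field \<Rightarrow> 'g::ab_group_add \<Rightarrow> 'g) \<Rightarrow> ('k, 'g) mvec \<Rightarrow> ('g \<Rightarrow> 'k) list \<Rightarrow> 'g" where
  "Psi scale P us = (THE x. \<forall>\<eta>. dual_elem scale \<eta> \<longrightarrow> \<eta> x = pair P (us @ [\<eta>]))"

text \<open>Gerstenhaber (Schouten) bracket of decomposables, indices counted from 0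
  (the sign (-1)^(i+j) is unchanged), extended bilinearly.\<close>
definition gerst_dec :: "('g \<Rightarrow> 'g \<Rightarrow> 'g) \<Rightarrow> 'g list \<Rightarrow> 'g list \<Rightarrow> ('k::field, 'g) mvec" where
  "gerst_dec br xs ys =
     concat (map (\<lambda>i. map (\<lambda>j. ((-1) ^ (i + j),
        br (xs ! i) (ys ! j) # (take i xs @ drop (Suc i) xs) @ (take j ys @ drop (Suc j) ys)))
        [0..<length ys]) [0..<length xs])"

definition gerst :: "('g \<Rightarrow> 'g \<Rightarrow> 'g) \<Rightarrow> ('k::field, 'g) mvec \<Rightarrow> ('k, 'g) mvec \<Rightarrow> ('k, 'g) mvec" where
  "gerst br P Q =
     concat (map (\<lambda>s. concat (map (\<lambda>t.
        map (\<lambda>c. (fst s * fst t * fst c, snd c)) (gerst_dec br (snd s) (snd t))) Q)) P)"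

definition ad_star :: "('g \<Rightarrow> 'g \<Rightarrow> 'g) \<Rightarrow> 'g \<Rightarrow> ('g \<Rightarrow> 'k::field) \<Rightarrow> ('g \<Rightarrow> 'k)" where
  "ad_star br x \<xi> = (\<lambda>y. - \<xi> (br x y))"

definition unshuffle2 :: "nat \<Rightarrow> nat \<Rightarrow> (nat \<Rightarrow> nat) set" where
  "unshuffle2 a b = {\<sigma>. \<sigma> permutes {..<a+b} \<and> strict_mono_on {..<a} \<sigma> \<and> strict_mono_on {a..<a+b} \<sigma>}"

definition unshuffle3 :: "nat \<Rightarrow> nat \<Rightarrow> nat \<Rightarrow> (nat \<Rightarrow> nat) set" where
  "unshuffle3 a b c = {\<sigma>. \<sigma> permutes {..<a+b+c} \<and> strict_mono_on {..<a} \<sigma>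
      \<and> strict_mono_on {a..<a+b} \<sigma> \<and> strict_mono_on {a+b..<a+b+c} \<sigma>}"

text \<open>Elements of Hom(wedge^n g^*, g) are represented as functions on lists of
  n covectors.  The bracket [[P,Q]] for P of arity n and Q of arity m
  (evaluated on a list us = [u_1,...,u_(m+n)]), with rho = ad^*.
  The sum over S_(m,1,n-1) is empty when n = 0, and that over S_(n,1,m-1) when m = 0.\<close>
definition hbr :: "('k::field \<Rightarrow> 'g::ab_group_add \<Rightarrow> 'g) \<Rightarrow> ('g \<Rightarrow> 'g \<Rightarrow> 'g) \<Rightarrow> nat \<Rightarrow> nat
    \<Rightarrow> (('g \<Rightarrow> 'k) list \<Rightarrow> 'g) \<Rightarrow> (('g \<Rightarrow> 'k) list \<Rightarrow> 'g) \<Rightarrow> ('g \<Rightarrow> 'k) list \<Rightarrow> 'g" where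
  "hbr scale br n m P Q us =
     (let u = (\<lambda>\<sigma> ids. map (\<lambda>i. us ! \<sigma> i) ids) in
       (if n = 0 then 0 else
         (\<Sum>\<sigma>\<in>unshuffle3 m 1 (n - 1).
            scale (of_int (sign \<sigma>))
              (P (ad_star br (Q (u \<sigma> [0..<m])) (us ! \<sigma> m) # u \<sigma> [m+1..<m+n]))))
     - scale ((-1) ^ (m * n))
       (if m = 0 then 0 else
         (\<Sum>\<sigma>\<in>unshuffle3 n 1 (m - 1).
            scale (of_int (sign \<sigma>))
              (Q (ad_star br (P (u \<sigma> [0..<n])) (us ! \<sigma> n) # u \<sigma> [n+1..<m+n]))))
     + scale ((-1) ^ (m * n))
         (\<Sum>\<sigma>\<in>unshuffle2 n m.
            scale (of_int (sign \<sigma>)) (br (P (u \<sigma> [0..<n])) (Q (u \<sigma> [n..<n+m])))))"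

end

theory Submission
  imports Defs "Jordan_Normal_Form.Determinant"
begin

text \<open>Pairing with a multivector is a determinant \<open>det(\<xi>_i(x_j))\<close>, and \<open>\<Psi>(P)\<close> is obtained by
  expanding it along the last covector.  For decomposables \<open>X\<close>, \<open>Y\<close>, the pairing of \<open>[X, Y]\<close>
  with \<open>u_1 \<and> \<dots> \<and> u_(p+q) \<and> \<eta>\<close> is a signed sum of determinants whose first column is
  \<open>[x_i, y_j]\<close>.  Laplace-expanding these along three blocks of columns -- \<open>[x_i, y_j]\<close>, the rest
  of \<open>X\<close>, the rest of \<open>Y\<close> -- distributes the covectors over the blocks as an unshuffle:
  if \<open>\<eta>\<close> meets \<open>[x_i, y_j]\<close> one obtains the term \<open>[\<Psi>(X)(\<dots>), \<Psi>(Y)(\<dots>)]\<close> of the bracket, if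
  some \<open>u_k\<close> meets it one obtains one of the two coadjoint terms.  Everything is bilinear, so
  the identity passes from decomposables to arbitrary multivectors.  The identity for \<open>r\<close> is the first one with \<open>r\<close> (of
  degree 1) in place of \<open>P\<close>.\<close>

section \<open>The determinant pairing by Laplace expansion\<close>

definition remove_nth :: "nat \<Rightarrow> 'a list \<Rightarrow> 'a list" where
  "remove_nth k xs = take k xs @ drop (Suc k) xs"

lemma length_remove_nth [simp]: "k < length xs \<Longrightarrow> length (remove_nth k xs) = length xs - 1"
  by (simp add: remove_nth_def)

lemma nth_remove_nth:
  "k < length xs \<Longrightarrow> i < length xs - 1 \<Longrightarrow>
   remove_nth k xs ! i = (if i < k then xs ! i else xs ! Suc i)"
  by (auto simp: remove_nth_def nth_append min_def)

fun det_expand :: "'g list \<Rightarrow> ('g \<Rightarrow> 'k::field) list \<Rightarrow> 'k" where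
  "det_expand xs [] = (if xs = [] then 1 else 0)"
| "det_expand xs (u # us) =
     (\<Sum>k<length xs. (-1)^k * u (xs!k) * det_expand (remove_nth k xs) us)"

declare det_expand.simps(2) [simp del]

lemma det_expand_length_neq: "length xs \<noteq> length us \<Longrightarrow> det_expand xs us = 0"
proof (induction us arbitrary: xs)
  case (Cons u us)
  have "det_expand (remove_nth k xs) us = 0" if "k < length xs" for k
    using Cons.prems that by (intro Cons.IH) simp
  then show ?case by (simp add: det_expand.simps)
qed simp

definition pairing_mat :: "('g \<Rightarrow> 'k::field) list \<Rightarrow> 'g list \<Rightarrow> 'k mat" where
  "pairing_mat us xs = mat (length us) (length xs) (\<lambda>(i,j). (us!i) (xs!j))"

lemma det_pair_eq_det:
  assumes "length xs = length us"
  shows "det_pair xs us = det (pairing_mat us xs)"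
proof -
  have "det (pairing_mat us xs) = (\<Sum>p \<in> {p. p permutes {0..<length us}}.
          of_int (sign p) * (\<Prod>i = 0..<length us. pairing_mat us xs $$ (i, p i)))"
    unfolding det_def using assms by (simp add: pairing_mat_def)
  also have "\<dots> = det_pair xs us"
    unfolding det_pair_def using assms
    by (auto simp: atLeast0LessThan pairing_mat_def permutes_in_image intro!: sum.cong prod.cong)
  finally show ?thesis ..
qed

lemma det_expand_eq_det:
  "length xs = length us \<Longrightarrow> det_expand xs us = det (pairing_mat us xs)"
proof (induction us arbitrary: xs)
  case Nil
  then show ?case by (simp add: pairing_mat_def det_def)
next
  case (Cons u us)
  let ?n = "length xs" and ?M = "pairing_mat (u#us) xs"
  have "?M \<in> carrier_mat ?n ?n" using Cons.prems by (simp add: pairing_mat_def)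
  then have "det ?M = (\<Sum>j<?n. ?M $$ (0,j) * cofactor ?M 0 j)"
    by (rule laplace_expansion_row) (use Cons.prems in simp)
  also have "\<dots> = (\<Sum>j<?n. (-1)^j * u (xs!j) * det_expand (remove_nth j xs) us)"
  proof (rule sum.cong[OF refl])
    fix j assume j: "j \<in> {..<?n}"
    have "mat_delete ?M 0 j = pairing_mat us (remove_nth j xs)"
      using j Cons.prems
      by (intro eq_matI) (auto simp: mat_delete_def pairing_mat_def nth_remove_nth)
    moreover have "det_expand (remove_nth j xs) us = det (pairing_mat us (remove_nth j xs))"
      using j Cons.prems by (intro Cons.IH) simp
    ultimately show "?M $$ (0,j) * cofactor ?M 0 j = (-1)^j * u (xs!j) * det_expand (remove_nth j xs) us"
      using j Cons.prems by (simp add: cofactor_def pairing_mat_def)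
  qed
  finally show ?case by (simp add: det_expand.simps)
qed

lemma det_pair_eq_det_expand: "det_pair xs us = det_expand xs us"
proof (cases "length xs = length us")
  case True
  then show ?thesis by (simp add: det_pair_eq_det det_expand_eq_det)
qed (simp add: det_expand_length_neq det_pair_def)

lemma det_expand_swap: "det_expand xs (a # b # w) = - det_expand xs (b # a # w)"
proof (cases "length xs = length (a#b#w)")
  case True
  have "swaprows 0 1 (pairing_mat (a#b#w) xs) = pairing_mat (b#a#w) xs"
    by (intro eq_matI) (auto simp: pairing_mat_def nth_Cons split: nat.splits)
  moreover have "det (swaprows 0 1 (pairing_mat (a#b#w) xs)) = - det (pairing_mat (a#b#w) xs)"
    by (rule det_swaprows[of _ "length xs"]) (use True in \<open>auto simp: pairing_mat_def\<close>)
  ultimately show ?thesis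
    using True det_expand_eq_det[of xs "a#b#w"] det_expand_eq_det[of xs "b#a#w"] by simp
qed (simp add: det_expand_length_neq)

lemma det_expand_snoc: "det_expand xs (w @ [e]) = (-1)^length w * det_expand xs (e # w)"
proof (induction w arbitrary: xs)
  case (Cons a w)
  have "det_expand xs ((a#w) @ [e]) = (-1)^length w * det_expand xs (a#e#w)"
    by (simp add: det_expand.simps Cons.IH sum_distrib_left algebra_simps)
  also have "\<dots> = (-1)^length (a#w) * det_expand xs (e#a#w)"
    by (subst det_expand_swap) simp
  finally show ?case .
qed simp

lemma det_expand_single [simp]: "det_expand [z] [v] = v z"
  by (simp add: det_expand.simps remove_nth_def)

lemma det_expand_Cons_sum:
  "det_expand X ((\<lambda>y. \<Sum>b\<in>I. d b * f b y) # B) = (\<Sum>b\<in>I. d b * det_expand X (f b # B))"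
  by (simp add: det_expand.simps(2) sum_distrib_left sum_distrib_right algebra_simps sum.swap[of _ I])

lemma det_expand_Cons_Cons_sum:
  "det_expand X (a # (\<lambda>y. \<Sum>b\<in>I. d b * f b y) # B) = (\<Sum>b\<in>I. d b * det_expand X (a # f b # B))"
  by (simp add: det_expand.simps(2) det_expand_Cons_sum sum_distrib_left sum_distrib_right
      algebra_simps sum.swap[of _ I])

lemma sum_list_concat: "sum_list (concat xss) = sum_list (map sum_list xss)"
  by (induction xss) auto

lemma sum_list_map_eq_sum_nth: "sum_list (map f xs) = (\<Sum>i<length xs. f (xs!i))"
  by (simp add: sum_list_sum_nth atLeast0LessThan)

lemma pair_gerst_dec:
  "pair (gerst_dec br X Y) vs = (\<Sum>i<length X. \<Sum>j<length Y. (-1)^(i+j) *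
     det_expand (br (X!i) (Y!j) # remove_nth i X @ remove_nth j Y) vs)"
  unfolding pair_def gerst_dec_def remove_nth_def det_pair_eq_det_expand
  by (simp add: sum_list_concat map_concat comp_def interv_sum_list_conv_sum_set_nat atLeast0LessThan)

lemma pair_gerst:
  "pair (gerst br P Q) vs = (\<Sum>a<length P. \<Sum>b<length Q.
     fst (P!a) * fst (Q!b) * pair (gerst_dec br (snd (P!a)) (snd (Q!b))) vs)"
proof -
  have "pair (gerst br P Q) vs = sum_list (map (\<lambda>s. sum_list (map (\<lambda>t.
      fst s * fst t * pair (gerst_dec br (snd s) (snd t)) vs) Q)) P)"
    unfolding pair_def gerst_def
    by (simp add: sum_list_concat map_concat comp_def sum_list_const_mult mult.assoc)
  then show ?thesis by (simp add: sum_list_map_eq_sum_nth)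
qed

section \<open>Recursive signed sums over unshuffles\<close>

text \<open>\<open>unshuffle_sum3 a b c w F\<close> sums \<open>F s A B C\<close> over the ways of splitting \<open>w\<close> into
  order-preserving sublists \<open>A\<close>, \<open>B\<close>, \<open>C\<close> of lengths \<open>a\<close>, \<open>b\<close>, \<open>c\<close>, where \<open>s\<close> is the sign of
  the corresponding unshuffle; the recursion is on the block receiving the head of \<open>w\<close>.\<close>

fun unshuffle_sum3 :: "nat \<Rightarrow> nat \<Rightarrow> nat \<Rightarrow> 'a list
    \<Rightarrow> (int \<Rightarrow> 'a list \<Rightarrow> 'a list \<Rightarrow> 'a list \<Rightarrow> 'b::ab_group_add) \<Rightarrow> 'b" where
  "unshuffle_sum3 a b c [] F = (if a = 0 \<and> b = 0 \<and> c = 0 then F 1 [] [] [] else 0)"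
| "unshuffle_sum3 a b c (u#w) F =
       (if 0 < a then unshuffle_sum3 (a-1) b c w (\<lambda>s A B C. F s (u#A) B C) else 0)
     + (if 0 < b then unshuffle_sum3 a (b-1) c w (\<lambda>s A B C. F ((-1)^a * s) A (u#B) C) else 0)
     + (if 0 < c then unshuffle_sum3 a b (c-1) w (\<lambda>s A B C. F ((-1)^(a+b) * s) A B (u#C)) else 0)"

declare unshuffle_sum3.simps [simp del]

lemma unshuffle_sum3_hom:
  assumes "\<And>x y. h (x + y) = h x + h y" "h 0 = 0"
  shows "h (unshuffle_sum3 a b c w F) = unshuffle_sum3 a b c w (\<lambda>s A B C. h (F s A B C))"
  by (induction w arbitrary: a b c F) (auto simp: unshuffle_sum3.simps assms)

lemma unshuffle_sum3_zero [simp]: "unshuffle_sum3 a b c w (\<lambda>s A B C. 0) = 0"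
  by (induction w arbitrary: a b c) (auto simp: unshuffle_sum3.simps)

lemma unshuffle_sum3_sum:
  "unshuffle_sum3 a b c w (\<lambda>s A B C. \<Sum>i\<in>I. F i s A B C) = (\<Sum>i\<in>I. unshuffle_sum3 a b c w (F i))"
  by (induction w arbitrary: a b c F) (auto simp: unshuffle_sum3.simps sum.distrib)

lemma unshuffle_sum3_cmult:
  "(x::'b::comm_ring) * unshuffle_sum3 a b c w F = unshuffle_sum3 a b c w (\<lambda>s A B C. x * F s A B C)"
  by (rule unshuffle_sum3_hom) (auto simp: distrib_left)

lemma unshuffle_sum3_neg:
  "- unshuffle_sum3 a b c w F = unshuffle_sum3 a b c w (\<lambda>s A B C. - F s A B C)"
  by (rule unshuffle_sum3_hom) simp_all

lemma unshuffle_sum3_sum2: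
  "(x::'b::comm_ring) * (\<Sum>i<n. \<Sum>j<m. d i j * unshuffle_sum3 a b c w (F i j))
     = unshuffle_sum3 a b c w (\<lambda>s A B C. \<Sum>i<n. \<Sum>j<m. x * d i j * F i j s A B C)"
  by (simp add: unshuffle_sum3_cmult unshuffle_sum3_sum sum_distrib_left mult.assoc)

lemma unshuffle_sum3_cong:
  "(\<And>s A B C. length A = a \<Longrightarrow> length B = b \<Longrightarrow> length C = c \<Longrightarrow>
      set A \<subseteq> set w \<Longrightarrow> set B \<subseteq> set w \<Longrightarrow> set C \<subseteq> set w \<Longrightarrow> F s A B C = G s A B C)
    \<Longrightarrow> unshuffle_sum3 a b c w F = unshuffle_sum3 a b c w G"
proof (induction w arbitrary: a b c F G)
  case Nil then show ?case by (simp add: unshuffle_sum3.simps)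
next
  case (Cons u w)
  show ?case unfolding unshuffle_sum3.simps
    by (intro arg_cong2[where f="(+)"] if_cong refl Cons.IH) (auto intro!: Cons.prems)
qed

lemma minus_one_power_cong: "even m = even n \<Longrightarrow> (-1::int)^m * s = (-1)^n * s"
  by (metis neg_one_even_power neg_one_odd_power)

lemma minus_one_power_mult: "(-1::int)^m * ((-1)^n * s) = (-1)^(m+n) * s"
  by (simp add: power_add)

lemma unshuffle_sum3_swap12:
  "unshuffle_sum3 a b c w F = unshuffle_sum3 b a c w (\<lambda>s B A C. F ((-1)^(a*b) * s) A B C)"
proof (induction w arbitrary: a b c F)
  case Nil then show ?case by (simp add: unshuffle_sum3.simps)
next
  case (Cons u w)
  have t1: "(if 0 < a then unshuffle_sum3 (a-1) b c w (\<lambda>s A B C. F s (u#A) B C) else 0)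
     = (if 0 < a then unshuffle_sum3 b (a-1) c w
          (\<lambda>s B A C. F ((-1)^(a*b) * ((-1)^b * s)) (u#A) B C) else 0)"
  proof (cases "0 < a")
    case True
    have sign: "(-1)^((a-1)*b) * s = (-1)^(a*b) * ((-1)^b * s)" for s :: int
      unfolding minus_one_power_mult using True by (intro minus_one_power_cong) (cases a, auto)
    show ?thesis by (subst Cons.IH) (simp only: sign if_P[OF True])
  qed simp
  have t2: "(if 0 < b then unshuffle_sum3 a (b-1) c w (\<lambda>s A B C. F ((-1)^a * s) A (u#B) C) else 0)
     = (if 0 < b then unshuffle_sum3 (b-1) a c w (\<lambda>s B A C. F ((-1)^(a*b) * s) A (u#B) C) else 0)"
  proof (cases "0 < b")
    case True
    have sign: "(-1)^a * ((-1)^(a*(b-1)) * s) = (-1)^(a*b) * s" for s :: int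
      unfolding minus_one_power_mult using True by (intro minus_one_power_cong) (cases b, auto)
    show ?thesis by (subst Cons.IH) (simp only: sign if_P[OF True])
  qed simp
  have t3: "(if 0 < c then unshuffle_sum3 a b (c-1) w (\<lambda>s A B C. F ((-1)^(a+b) * s) A B (u#C)) else 0)
     = (if 0 < c then unshuffle_sum3 b a (c-1) w
          (\<lambda>s B A C. F ((-1)^(a*b) * ((-1)^(b+a) * s)) A B (u#C)) else 0)"
    by (subst Cons.IH) (simp add: algebra_simps)
  show ?case unfolding unshuffle_sum3.simps(2) t1 t2 t3 by (simp add: algebra_simps)
qed

lemma unshuffle_sum3_swap23:
  "unshuffle_sum3 a b c w F = unshuffle_sum3 a c b w (\<lambda>s A C B. F ((-1)^(b*c) * s) A B C)"
proof (induction w arbitrary: a b c F)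
  case Nil then show ?case by (simp add: unshuffle_sum3.simps)
next
  case (Cons u w)
  have t1: "(if 0 < a then unshuffle_sum3 (a-1) b c w (\<lambda>s A B C. F s (u#A) B C) else 0)
     = (if 0 < a then unshuffle_sum3 (a-1) c b w (\<lambda>s A C B. F ((-1)^(b*c) * s) (u#A) B C) else 0)"
    by (subst Cons.IH) simp
  have t2: "(if 0 < b then unshuffle_sum3 a (b-1) c w (\<lambda>s A B C. F ((-1)^a * s) A (u#B) C) else 0)
     = (if 0 < b then unshuffle_sum3 a c (b-1) w
          (\<lambda>s A C B. F ((-1)^(b*c) * ((-1)^(a+c) * s)) A (u#B) C) else 0)"
  proof (cases "0 < b")
    case True
    have sign: "(-1)^a * ((-1)^((b-1)*c) * s) = (-1)^(b*c) * ((-1)^(a+c) * s)" for s :: int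
      unfolding minus_one_power_mult using True by (intro minus_one_power_cong) (cases b, auto)
    show ?thesis by (subst Cons.IH) (simp only: sign if_P[OF True])
  qed simp
  have t3: "(if 0 < c then unshuffle_sum3 a b (c-1) w (\<lambda>s A B C. F ((-1)^(a+b) * s) A B (u#C)) else 0)
     = (if 0 < c then unshuffle_sum3 a (c-1) b w
          (\<lambda>s A C B. F ((-1)^(b*c) * ((-1)^a * s)) A B (u#C)) else 0)"
  proof (cases "0 < c")
    case True
    have sign: "(-1)^(a+b) * ((-1)^(b*(c-1)) * s) = (-1)^(b*c) * ((-1)^a * s)" for s :: int
      unfolding minus_one_power_mult using True by (intro minus_one_power_cong) (cases c, auto)
    show ?thesis by (subst Cons.IH) (simp only: sign if_P[OF True])
  qed simp
  show ?case unfolding unshuffle_sum3.simps(2) t1 t2 t3 by (simp add: algebra_simps)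
qed

lemma unshuffle_sum3_rotate:
  "unshuffle_sum3 a b c w F = unshuffle_sum3 c a b w (\<lambda>s C A B. F ((-1)^(c*(a+b)) * s) A B C)"
proof -
  have sign: "(-1)^(b*c) * ((-1)^(a*c) * s) = (-1)^(c*(a+b)) * s" for s :: int
    unfolding minus_one_power_mult by (simp add: algebra_simps)
  show ?thesis
    by (subst unshuffle_sum3_swap23, subst unshuffle_sum3_swap12) (simp only: sign)
qed

lemma sum_lessThan_add: "(\<Sum>k<m+(n::nat). f k) = (\<Sum>k<m. f k) + (\<Sum>k<n. f (m+k))"
  by (induction n) (auto simp: add.assoc)

lemma det_expand_append3:
  "det_expand (A @ B @ C) v = unshuffle_sum3 (length A) (length B) (length C) v
      (\<lambda>s V0 V1 V2. of_int s * det_expand A V0 * det_expand B V1 * det_expand C V2)"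
proof (induction v arbitrary: A B C)
  case Nil then show ?case by (simp add: unshuffle_sum3.simps)
next
  case (Cons u v)
  let ?a = "length A" and ?b = "length B" and ?c = "length C"
  have "det_expand (A @ B @ C) (u#v) =
       (\<Sum>k<?a. (-1)^k * u (A!k) * det_expand (remove_nth k A @ B @ C) v)
     + (\<Sum>k<?b. (-1)^(?a+k) * u (B!k) * det_expand (A @ remove_nth k B @ C) v)
     + (\<Sum>k<?c. (-1)^(?a+?b+k) * u (C!k) * det_expand (A @ B @ remove_nth k C) v)"
    unfolding det_expand.simps(2) length_append add.assoc[symmetric] sum_lessThan_add
    by (intro arg_cong2[where f="(+)"] sum.cong refl)
       (auto simp: nth_append remove_nth_def add.assoc)
  also have "\<dots> =
       (if 0 < ?a then unshuffle_sum3 (?a-1) ?b ?c v (\<lambda>s V0 V1 V2.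
          of_int s * det_expand A (u#V0) * det_expand B V1 * det_expand C V2) else 0)
     + (if 0 < ?b then unshuffle_sum3 ?a (?b-1) ?c v (\<lambda>s V0 V1 V2.
          of_int ((-1)^?a * s) * det_expand A V0 * det_expand B (u#V1) * det_expand C V2) else 0)
     + (if 0 < ?c then unshuffle_sum3 ?a ?b (?c-1) v (\<lambda>s V0 V1 V2.
          of_int ((-1)^(?a+?b) * s) * det_expand A V0 * det_expand B V1 * det_expand C (u#V2)) else 0)"
    by (intro arg_cong2[where f="(+)"])
       (auto simp: Cons.IH unshuffle_sum3_cmult simp flip: unshuffle_sum3_sum
          intro!: unshuffle_sum3_cong,
        auto simp: det_expand.simps(2) sum_distrib_left sum_distrib_right power_add algebra_simps)
  finally show ?case by (simp add: unshuffle_sum3.simps)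
qed

lemma det_expand_singleton: "length V = 1 \<Longrightarrow> det_expand [z] V = hd V z"
  by (cases V) auto

lemma det_expand_Cons_append:
  assumes "length X = p" "length Y = q"
  shows "det_expand (z # X @ Y) (\<eta> # us) =
      unshuffle_sum3 0 p q us (\<lambda>s _ A B. of_int s * \<eta> z * det_expand X A * det_expand Y B)
    - (if 0 < p then unshuffle_sum3 1 (p-1) q us
         (\<lambda>s V A B. of_int s * hd V z * det_expand X (\<eta>#A) * det_expand Y B) else 0)
    + (if 0 < q then (-1)^Suc p * unshuffle_sum3 1 p (q-1) us
         (\<lambda>s V A B. of_int s * hd V z * det_expand X A * det_expand Y (\<eta>#B)) else 0)"
    (is "_ = ?rhs")
proof -
  have bracket: "unshuffle_sum3 0 p q us
        (\<lambda>s V A B. of_int s * det_expand [z] (\<eta>#V) * det_expand X A * det_expand Y B)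
      = unshuffle_sum3 0 p q us (\<lambda>s _ A B. of_int s * \<eta> z * det_expand X A * det_expand Y B)"
    by (rule unshuffle_sum3_cong) simp
  have left: "unshuffle_sum3 1 (p-1) q us
        (\<lambda>s V A B. of_int (- s) * det_expand [z] V * det_expand X (\<eta>#A) * det_expand Y B)
      = - unshuffle_sum3 1 (p-1) q us
        (\<lambda>s V A B. of_int s * hd V z * det_expand X (\<eta>#A) * det_expand Y B)"
    by (subst unshuffle_sum3_neg, rule unshuffle_sum3_cong) (simp add: det_expand_singleton)
  have right: "unshuffle_sum3 1 p (q-1) us
        (\<lambda>s V A B. of_int ((-1)^(1+p) * s) * det_expand [z] V * det_expand X A * det_expand Y (\<eta>#B))
      = (-1)^Suc p * unshuffle_sum3 1 p (q-1) us
        (\<lambda>s V A B. of_int s * hd V z * det_expand X A * det_expand Y (\<eta>#B))"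
    by (subst unshuffle_sum3_cmult, rule unshuffle_sum3_cong) (simp add: det_expand_singleton)
  have "det_expand (z # X @ Y) (\<eta> # us) = unshuffle_sum3 1 p q (\<eta> # us)
      (\<lambda>s V A B. of_int s * det_expand [z] V * det_expand X A * det_expand Y B)"
    using det_expand_append3[of "[z]" X Y] assms by simp
  also have "\<dots> =
      unshuffle_sum3 0 p q us (\<lambda>s V A B. of_int s * det_expand [z] (\<eta>#V) * det_expand X A * det_expand Y B)
    + (if 0 < p then unshuffle_sum3 1 (p-1) q us
         (\<lambda>s V A B. of_int (- s) * det_expand [z] V * det_expand X (\<eta>#A) * det_expand Y B) else 0)
    + (if 0 < q then unshuffle_sum3 1 p (q-1) us
         (\<lambda>s V A B. of_int ((-1)^(1+p) * s) * det_expand [z] V * det_expand X A * det_expand Y (\<eta>#B)) else 0)"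
    by (simp add: unshuffle_sum3.simps(2))
  also have "\<dots> = ?rhs"
    unfolding bracket left right by auto
  finally show ?thesis .
qed
section \<open>Unshuffle permutations\<close>

definition block_start :: "nat list \<Rightarrow> nat \<Rightarrow> nat" where "block_start ns k = sum_list (take k ns)"

lemma block_start_0[simp]: "block_start ns 0 = 0" by (simp add: block_start_def)

lemma block_start_Suc: "k < length ns \<Longrightarrow> block_start ns (Suc k) = block_start ns k + ns!k"
  by (simp add: block_start_def take_Suc_conv_app_nth)

lemma block_start_Cons_Suc[simp]: "block_start (n#ns) (Suc k) = n + block_start ns k"
  by (simp add: block_start_def)

lemma block_start_mono: "j \<le> j' \<Longrightarrow> block_start ns j \<le> block_start ns j'"
proof -
  assume "j \<le> j'"
  then have "take j' ns = take j ns @ take (j'-j) (drop j ns)"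
    by (metis le_add_diff_inverse take_add)
  then show ?thesis by (simp add: block_start_def)
qed

lemma block_start_add_le_sum_list: "k < length ns \<Longrightarrow> block_start ns k + ns!k \<le> sum_list ns"
proof -
  assume k: "k < length ns"
  have "block_start ns (Suc k) \<le> block_start ns (length ns)" using k by (intro block_start_mono) simp
  then have "block_start ns (Suc k) \<le> sum_list ns" by (simp add: block_start_def)
  then show ?thesis using block_start_Suc[OF k] by simp
qed

lemma block_start_update_le: "j \<le> k \<Longrightarrow> block_start (ns[k:=x]) j = block_start ns j"
  by (simp add: block_start_def)

lemma block_start_update_gt: "k < j \<Longrightarrow> j \<le> length ns \<Longrightarrow> block_start (ns[k:=x]) j + ns!k = block_start ns j + x"
proof (induction j)
  case 0 then show ?case by simp
next
  case (Suc j)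
  then have k: "k < length ns" "j < length ns" by auto
  show ?case
  proof (cases "j = k")
    case True
    then show ?thesis using k by (simp add: block_start_Suc block_start_update_le)
  next
    case False
    then have "block_start (ns[k:=x]) j + ns!k = block_start ns j + x" using Suc by auto
    then show ?thesis using k False by (simp add: block_start_Suc)
  qed
qed

lemma block_containing: "i < sum_list ns \<Longrightarrow> \<exists>k<length ns. block_start ns k \<le> i \<and> i < block_start ns k + ns!k"
proof (induction ns arbitrary: i)
  case Nil then show ?case by simp
next
  case (Cons n ns)
  show ?case
  proof (cases "i < n")
    case True then show ?thesis by (intro exI[of _ 0]) simp
  next
    case False
    then obtain k where "k < length ns" "block_start ns k \<le> i - n" "i - n < block_start ns k + ns!k"
      using Cons by (metis add_diff_inverse_nat add_less_cancel_left sum_list.Cons)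
    then show ?thesis using False by (intro exI[of _ "Suc k"]) auto
  qed
qed

definition unshuffles :: "nat list \<Rightarrow> (nat \<Rightarrow> nat) set" where
  "unshuffles ns = {\<sigma>. \<sigma> permutes {..<sum_list ns} \<and>
     (\<forall>k<length ns. strict_mono_on {block_start ns k..<block_start ns k + ns!k} \<sigma>)}"

definition blocks :: "(nat \<Rightarrow> nat) \<Rightarrow> nat list \<Rightarrow> 'a list \<Rightarrow> 'a list list" where
  "blocks \<sigma> ns us = map (\<lambda>k. map (\<lambda>i. us ! \<sigma> i) [block_start ns k..<block_start ns k + ns!k]) [0..<length ns]"

fun unshuffle_sum :: "nat list \<Rightarrow> 'a list \<Rightarrow> (int \<Rightarrow> 'a list list \<Rightarrow> 'b::comm_monoid_add) \<Rightarrow> 'b" where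
  "unshuffle_sum ns [] F = (if (\<forall>n\<in>set ns. n = 0) then F 1 (replicate (length ns) []) else 0)"
| "unshuffle_sum ns (u#w) F = (\<Sum>k<length ns. if 0 < ns!k then
      unshuffle_sum (ns[k := ns!k - 1]) w (\<lambda>s Vs. F ((-1)^(block_start ns k) * s) (Vs[k := u # Vs!k])) else 0)"

definition perm_lift :: "(nat \<Rightarrow> nat) \<Rightarrow> nat \<Rightarrow> nat" where
  "perm_lift \<tau> i = (case i of 0 \<Rightarrow> 0 | Suc j \<Rightarrow> Suc (\<tau> j))"

definition perm_cycle :: "nat \<Rightarrow> nat \<Rightarrow> nat" where
  "perm_cycle m i = (if i < m then Suc i else if i = m then 0 else i)"

definition perm_insert :: "nat \<Rightarrow> (nat \<Rightarrow> nat) \<Rightarrow> nat \<Rightarrow> nat" where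
  "perm_insert m \<tau> i = (if i < m then Suc (\<tau> i) else if i = m then 0 else Suc (\<tau> (i - 1)))"

definition perm_remove :: "nat \<Rightarrow> (nat \<Rightarrow> nat) \<Rightarrow> nat \<Rightarrow> nat" where
  "perm_remove m \<sigma> j = (if j < m then \<sigma> j - 1 else \<sigma> (Suc j) - 1)"

lemma perm_lift_eq_map_permutation: "\<tau> permutes {..<N} \<Longrightarrow> perm_lift \<tau> = map_permutation {..<N} Suc \<tau>"
proof (rule ext)
  fix x assume t: "\<tau> permutes {..<N}"
  show "perm_lift \<tau> x = map_permutation {..<N} Suc \<tau> x"
  proof (cases x)
    case 0 then show ?thesis by (auto simp: perm_lift_def map_permutation_def restrict_id_def)
  next
    case (Suc j)
    show ?thesis
    proof (cases "j < N")
      case True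
      have "inv_into {..<N} Suc (Suc j) = j" using True by (intro inv_into_f_eq) auto
      then show ?thesis using Suc True by (auto simp: perm_lift_def map_permutation_def restrict_id_def)
    next
      case False
      then have "\<tau> j = j" using t by (simp add: permutes_not_in)
      then show ?thesis using Suc False by (auto simp: perm_lift_def map_permutation_def restrict_id_def)
    qed
  qed
qed

lemma perm_lift_permutes: "\<tau> permutes {..<N} \<Longrightarrow> perm_lift \<tau> permutes {..<Suc N}"
proof -
  assume t: "\<tau> permutes {..<N}"
  have "map_permutation {..<N} Suc \<tau> permutes (Suc ` {..<N})"
    by (rule map_permutation_permutes[OF _ t]) (simp add: bij_betw_def)
  then have "map_permutation {..<N} Suc \<tau> permutes {..<Suc N}"
    by (rule permutes_subset) auto
  then show ?thesis using perm_lift_eq_map_permutation[OF t] by simp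
qed

lemma sign_perm_lift: "\<tau> permutes {..<N} \<Longrightarrow> sign (perm_lift \<tau>) = sign \<tau>"
  by (simp add: perm_lift_eq_map_permutation sign_map_permutation)

lemma perm_cycle_Suc: "perm_cycle (Suc m) = perm_cycle m \<circ> Transposition.transpose m (Suc m)"
  by (rule ext) (auto simp: perm_cycle_def Transposition.transpose_def)

lemma perm_cycle_permutes: "perm_cycle m permutes {..m}"
proof (induction m)
  case 0
  have "perm_cycle 0 = id" by (rule ext) (simp add: perm_cycle_def)
  then show ?case by (metis permutes_id)
next
  case (Suc m)
  have "perm_cycle m permutes {..Suc m}" by (rule permutes_subset[OF Suc]) auto
  moreover have "Transposition.transpose m (Suc m) permutes {..Suc m}"
    by (rule permutes_swap_id) auto
  ultimately show ?case unfolding perm_cycle_Suc by (rule permutes_compose[rotated])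
qed

lemma sign_perm_cycle: "sign (perm_cycle m) = (-1)^m"
proof (induction m)
  case 0
  have "perm_cycle 0 = id" by (rule ext) (simp add: perm_cycle_def)
  then show ?case by (metis sign_id power_0)
next
  case (Suc m)
  have p1: "permutation (perm_cycle m)" using perm_cycle_permutes by (rule permutes_imp_permutation[rotated]) simp
  have p2: "permutation (Transposition.transpose m (Suc m))" by (rule permutation_swap_id)
  show ?case unfolding perm_cycle_Suc sign_compose[OF p1 p2] Suc sign_swap_id by simp
qed

lemma perm_insert_eq: "perm_insert m \<tau> = perm_lift \<tau> \<circ> perm_cycle m"
  by (rule ext) (auto simp: perm_insert_def perm_lift_def perm_cycle_def split: nat.splits)

lemma perm_insert_permutes: "\<tau> permutes {..<N} \<Longrightarrow> m \<le> N \<Longrightarrow> perm_insert m \<tau> permutes {..<Suc N}"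
proof -
  assume t: "\<tau> permutes {..<N}" and m: "m \<le> N"
  have "perm_cycle m permutes {..<Suc N}" by (rule permutes_subset[OF perm_cycle_permutes]) (use m in auto)
  then show ?thesis unfolding perm_insert_eq by (rule permutes_compose) (rule perm_lift_permutes[OF t])
qed

lemma sign_perm_insert: "\<tau> permutes {..<N} \<Longrightarrow> m \<le> N \<Longrightarrow> sign (perm_insert m \<tau>) = (-1)^m * sign \<tau>"
proof -
  assume t: "\<tau> permutes {..<N}" and m: "m \<le> N"
  have p1: "permutation (perm_lift \<tau>)" by (rule permutes_imp_permutation[OF _ perm_lift_permutes[OF t]]) simp
  have p2: "permutation (perm_cycle m)" using perm_cycle_permutes by (rule permutes_imp_permutation[rotated]) simp
  show ?thesis unfolding perm_insert_eq sign_compose[OF p1 p2] sign_perm_lift[OF t] sign_perm_cycle by simp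
qed

lemma perm_remove_insert: "perm_remove m (perm_insert m \<tau>) = \<tau>"
  by (rule ext) (simp add: perm_remove_def perm_insert_def)

lemma permutes_nonzero: "\<sigma> permutes S \<Longrightarrow> \<sigma> m = 0 \<Longrightarrow> i \<noteq> m \<Longrightarrow> \<sigma> i \<noteq> 0"
  by (metis permutes_inj injD)

lemma perm_insert_remove: "\<sigma> permutes S \<Longrightarrow> \<sigma> m = 0 \<Longrightarrow> perm_insert m (perm_remove m \<sigma>) = \<sigma>"
proof (rule ext)
  fix i assume s: "\<sigma> permutes S" "\<sigma> m = 0"
  show "perm_insert m (perm_remove m \<sigma>) i = \<sigma> i"
    using permutes_nonzero[OF s, of i] s by (auto simp: perm_insert_def perm_remove_def)
qed

lemma perm_remove_permutes:
  assumes s: "\<sigma> permutes {..<Suc N}" "\<sigma> m = 0" and m: "m \<le> N"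
  shows "perm_remove m \<sigma> permutes {..<N}"
proof (rule bij_imp_permutes)
  define pos where "pos j = (if j < m then j else Suc j)" for j
  have rp: "perm_remove m \<sigma> j = \<sigma> (pos j) - 1" for j by (simp add: perm_remove_def pos_def)
  have nz: "\<sigma> (pos j) \<noteq> 0" for j by (rule permutes_nonzero[OF s]) (simp add: pos_def)
  have inj: "inj_on (perm_remove m \<sigma>) {..<N}"
  proof (rule inj_onI)
    fix x y assume "perm_remove m \<sigma> x = perm_remove m \<sigma> y"
    then have "\<sigma> (pos x) = \<sigma> (pos y)" using nz[of x] nz[of y] by (simp add: rp)
    then have "pos x = pos y" using permutes_inj[OF s(1)] by (simp add: inj_eq)
    then show "x = y" by (auto simp: pos_def split: if_splits)
  qed
  have im: "perm_remove m \<sigma> ` {..<N} \<subseteq> {..<N}"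
  proof
    fix y assume "y \<in> perm_remove m \<sigma> ` {..<N}"
    then obtain x where x: "x < N" "y = perm_remove m \<sigma> x" by auto
    have "pos x < Suc N" using x by (simp add: pos_def)
    then have "\<sigma> (pos x) < Suc N" using permutes_in_image[OF s(1)] by simp
    then show "y \<in> {..<N}" using x nz[of x] by (simp add: rp)
  qed
  show "bij_betw (perm_remove m \<sigma>) {..<N} {..<N}"
    unfolding bij_betw_def using inj endo_inj_surj[OF _ im inj] by simp
  fix x assume "x \<notin> {..<N}"
  then have "\<sigma> (Suc x) = Suc x" using s(1) by (simp add: permutes_not_in)
  then show "perm_remove m \<sigma> x = x" using \<open>x \<notin> {..<N}\<close> m by (simp add: perm_remove_def)
qed

lemma strict_mono_on_Suc_cong:
  assumes "\<And>x. x \<in> A \<Longrightarrow> f x = Suc (g x)"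
  shows "strict_mono_on A f \<longleftrightarrow> strict_mono_on A g"
  using assms unfolding strict_mono_on_def by auto

lemma strict_mono_on_shift_iff:
  assumes "\<And>x. a \<le> x \<Longrightarrow> x < b \<Longrightarrow> f (Suc x) = Suc (g x)"
  shows "strict_mono_on {Suc a..<Suc b} f \<longleftrightarrow> strict_mono_on {a..<b} g"
proof
  assume h: "strict_mono_on {Suc a..<Suc b} f"
  show "strict_mono_on {a..<b} g"
  proof (rule strict_mono_onI)
    fix x y assume "x \<in> {a..<b}" "y \<in> {a..<b}" "x < y"
    then have "f (Suc x) < f (Suc y)" by (intro strict_mono_onD[OF h]) auto
    then show "g x < g y" using assms \<open>x \<in> _\<close> \<open>y \<in> _\<close> by auto
  qed
next
  assume h: "strict_mono_on {a..<b} g"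
  show "strict_mono_on {Suc a..<Suc b} f"
  proof (rule strict_mono_onI)
    fix x y assume x: "x \<in> {Suc a..<Suc b}" and y: "y \<in> {Suc a..<Suc b}" and "x < y"
    then obtain x' y' where "x = Suc x'" "y = Suc y'" by (metis atLeastLessThan_iff not0_implies_Suc not_less0 zero_less_Suc less_le_trans Suc_le_eq)
    moreover have "g x' < g y'" using \<open>x = Suc x'\<close> \<open>y = Suc y'\<close> x y \<open>x < y\<close>
      by (intro strict_mono_onD[OF h]) auto
    ultimately show "f x < f y" using assms x y by auto
  qed
qed

lemma strict_mono_on_zero_at_start_iff:
  assumes "f m = 0" "\<And>x. m \<le> x \<Longrightarrow> x < m + n - 1 \<Longrightarrow> f (Suc x) = Suc (g x)" "0 < n"
  shows "strict_mono_on {m..<m+n} f \<longleftrightarrow> strict_mono_on {m..<m+n-1} g"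
proof -
  have e: "{m..<m+n} = insert m {Suc m..<Suc (m+n-1)}" using assms(3) by auto
  have "strict_mono_on {Suc m..<Suc (m+n-1)} f \<longleftrightarrow> strict_mono_on {m..<m+n-1} g"
    by (rule strict_mono_on_shift_iff) (use assms(2) in auto)
  moreover have "strict_mono_on (insert m {Suc m..<Suc (m+n-1)}) f \<longleftrightarrow> strict_mono_on {Suc m..<Suc (m+n-1)} f"
  proof
    assume "strict_mono_on (insert m {Suc m..<Suc (m+n-1)}) f"
    then show "strict_mono_on {Suc m..<Suc (m+n-1)} f" by (auto simp: strict_mono_on_def)
  next
    assume h: "strict_mono_on {Suc m..<Suc (m+n-1)} f"
    show "strict_mono_on (insert m {Suc m..<Suc (m+n-1)}) f"
    proof (rule strict_mono_onI)
      fix x y assume x: "x \<in> insert m {Suc m..<Suc (m+n-1)}" and y: "y \<in> insert m {Suc m..<Suc (m+n-1)}" and xy: "x < y"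
      show "f x < f y"
      proof (cases "x = m")
        case True
        then have "y \<in> {Suc m..<Suc (m+n-1)}" using y xy by auto
        then obtain y' where "y = Suc y'" "m \<le> y'" "y' < m+n-1" by (cases y) auto
        then show ?thesis using True assms by simp
      next
        case False
        then show ?thesis using x y xy by (intro strict_mono_onD[OF h]) auto
      qed
    qed
  qed
  ultimately show ?thesis unfolding e by simp
qed

lemma sum_list_update_nat:
  "k < length (ns :: nat list) \<Longrightarrow> sum_list (ns[k:=x]) + ns!k = sum_list ns + x"
  using block_start_update_gt[of k "length ns" ns x] by (simp add: block_start_def)

lemma strict_mono_on_block_perm_insert_iff:
  assumes k: "k < length ns" "0 < ns!k" and j: "j < length ns"
  shows "strict_mono_on {block_start ns j..<block_start ns j + ns!j} (perm_insert (block_start ns k) \<tau>)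
    \<longleftrightarrow> strict_mono_on {block_start (ns[k:=ns!k-1]) j..<block_start (ns[k:=ns!k-1]) j + ns[k:=ns!k-1]!j} \<tau>"
proof -
  let ?m = "block_start ns k" and ?ns' = "ns[k:=ns!k-1]"
  consider "j < k" | "j = k" | "k < j" by linarith
  then show ?thesis
  proof cases
    case 1
    have le: "block_start ns j + ns!j \<le> ?m" using block_start_mono[of "Suc j" k ns] block_start_Suc[OF j] 1 by simp
    have "block_start ?ns' j = block_start ns j" using 1 by (simp add: block_start_update_le)
    moreover have "?ns'!j = ns!j" using 1 by simp
    moreover have "strict_mono_on {block_start ns j..<block_start ns j + ns!j} (perm_insert ?m \<tau>) \<longleftrightarrow>
           strict_mono_on {block_start ns j..<block_start ns j + ns!j} \<tau>"
      by (rule strict_mono_on_Suc_cong) (use le in \<open>auto simp: perm_insert_def\<close>)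
    ultimately show ?thesis by simp
  next
    case 2
    have "block_start ?ns' j = ?m" using 2 by (simp add: block_start_update_le)
    moreover have "?ns'!j = ns!k - 1" using 2 k by simp
    moreover have "strict_mono_on {?m..<?m + ns!k} (perm_insert ?m \<tau>) \<longleftrightarrow>
           strict_mono_on {?m..<?m + ns!k - 1} \<tau>"
      by (rule strict_mono_on_zero_at_start_iff) (use k in \<open>auto simp: perm_insert_def\<close>)
    ultimately show ?thesis using 2 k by (simp add: add.commute)
  next
    case 3
    have ge: "?m + ns!k \<le> block_start ns j" using block_start_mono[of "Suc k" j ns] block_start_Suc[OF k(1)] 3 by simp
    have "block_start ?ns' j + ns!k = block_start ns j + (ns!k - 1)" using block_start_update_gt[of k j ns] 3 j by simp
    then have e': "block_start ns j = Suc (block_start ?ns' j)" using k(2) by simp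
    moreover have "?ns'!j = ns!j" using 3 by simp
    moreover have "strict_mono_on {Suc (block_start ?ns' j)..<Suc (block_start ?ns' j + ns!j)} (perm_insert ?m \<tau>) \<longleftrightarrow>
           strict_mono_on {block_start ?ns' j..<block_start ?ns' j + ns!j} \<tau>"
      by (rule strict_mono_on_shift_iff) (use ge e' k(2) in \<open>auto simp: perm_insert_def\<close>)
    ultimately show ?thesis by simp
  qed
qed

lemma perm_insert_in_unshuffles_iff:
  assumes k: "k < length ns" "0 < ns!k"
    and t: "\<tau> permutes {..<sum_list (ns[k:=ns!k-1])}"
  shows "perm_insert (block_start ns k) \<tau> \<in> unshuffles ns \<longleftrightarrow> \<tau> \<in> unshuffles (ns[k:=ns!k-1])"
proof -
  let ?m = "block_start ns k" and ?ns' = "ns[k:=ns!k-1]"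
  define N where "N = sum_list ?ns'"
  have sN: "sum_list ns = Suc N" using sum_list_update_nat[OF k(1), of "ns!k-1"] k(2) by (simp add: N_def)
  have mk: "?m + ns!k \<le> Suc N" using block_start_add_le_sum_list[OF k(1)] sN by simp
  have "perm_insert ?m \<tau> permutes {..<sum_list ns}"
    unfolding sN by (rule perm_insert_permutes[OF t[folded N_def]]) (use mk k in simp)
  then show ?thesis
    using t strict_mono_on_block_perm_insert_iff[OF k] by (auto simp: unshuffles_def)
qed

lemma blocks_perm_insert:
  assumes k: "k < length ns" "0 < ns!k"
  shows "blocks (perm_insert (block_start ns k) \<tau>) ns (u#us) =
     (blocks \<tau> (ns[k:=ns!k-1]) us)[k := u # (blocks \<tau> (ns[k:=ns!k-1]) us)!k]"
proof (rule nth_equalityI)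
  let ?m = "block_start ns k" and ?ns' = "ns[k:=ns!k-1]"
  show "length (blocks (perm_insert ?m \<tau>) ns (u#us)) = length ((blocks \<tau> ?ns' us)[k := u # (blocks \<tau> ?ns' us)!k])"
    by (simp add: blocks_def)
  fix j assume "j < length (blocks (perm_insert ?m \<tau>) ns (u#us))"
  then have j: "j < length ns" by (simp add: blocks_def)
  have lhs: "blocks (perm_insert ?m \<tau>) ns (u#us) ! j = map (\<lambda>i. (u#us) ! perm_insert ?m \<tau> i) [block_start ns j..<block_start ns j + ns!j]"
    using j by (simp add: blocks_def)
  consider "j < k" | "j = k" | "k < j" by linarith
  then show "blocks (perm_insert ?m \<tau>) ns (u#us) ! j = ((blocks \<tau> ?ns' us)[k := u # (blocks \<tau> ?ns' us)!k]) ! j"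
  proof cases
    case 1
    have le: "block_start ns j + ns!j \<le> ?m" using block_start_mono[of "Suc j" k ns] block_start_Suc[OF j] 1 by simp
    have rhs: "((blocks \<tau> ?ns' us)[k := u # (blocks \<tau> ?ns' us)!k]) ! j = map (\<lambda>i. us ! \<tau> i) [block_start ns j..<block_start ns j + ns!j]"
      using 1 j by (simp add: blocks_def block_start_update_le)
    show ?thesis unfolding lhs rhs using le by (intro map_cong refl) (auto simp: perm_insert_def)
  next
    case 2
    have rhs: "((blocks \<tau> ?ns' us)[k := u # (blocks \<tau> ?ns' us)!k]) ! j = u # map (\<lambda>i. us ! \<tau> i) [?m..<?m + (ns!k - 1)]"
      using 2 j by (simp add: blocks_def block_start_update_le)
    have ups: "[?m..<?m + ns!k] = ?m # map Suc [?m..<?m + (ns!k - 1)]"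
      using k(2) by (simp add: map_Suc_upt upt_conv_Cons)
    show ?thesis using lhs rhs unfolding 2 ups by (auto simp: perm_insert_def)
  next
    case 3
    have "block_start ?ns' j + ns!k = block_start ns j + (ns!k - 1)" using block_start_update_gt[of k j ns] 3 j by simp
    then have e': "block_start ns j = Suc (block_start ?ns' j)" using k(2) by simp
    have rhs: "((blocks \<tau> ?ns' us)[k := u # (blocks \<tau> ?ns' us)!k]) ! j = map (\<lambda>i. us ! \<tau> i) [block_start ?ns' j..<block_start ?ns' j + ns!j]"
      using 3 j by (simp add: blocks_def)
    have ups: "[block_start ns j..<block_start ns j + ns!j] = map Suc [block_start ?ns' j..<block_start ?ns' j + ns!j]"
      unfolding e' by (simp add: map_Suc_upt)
    have ge: "?m < block_start ns j" using block_start_mono[of "Suc k" j ns] block_start_Suc[OF k(1)] 3 k(2) by simp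
    show ?thesis unfolding lhs rhs ups using ge e' by (auto simp: perm_insert_def)
  qed
qed

lemma finite_unshuffles: "finite (unshuffles ns)"
proof -
  have "unshuffles ns \<subseteq> {\<sigma>. \<sigma> permutes {..<sum_list ns}}" by (auto simp: unshuffles_def)
  then show ?thesis by (rule finite_subset) (simp add: finite_permutations)
qed

lemma block_start_inj:
  assumes "k1 < length ns" "k2 < length ns" "0 < ns!k1" "0 < ns!k2" "block_start ns k1 = block_start ns k2"
  shows "k1 = k2"
proof (rule ccontr)
  assume "k1 \<noteq> k2"
  then consider "k1 < k2" | "k2 < k1" by linarith
  then show False
  proof cases
    case 1
    have "block_start ns (Suc k1) \<le> block_start ns k2" using 1 by (intro block_start_mono) simp
    then show False using block_start_Suc[OF assms(1)] assms by simp
  next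
    case 2
    have "block_start ns (Suc k2) \<le> block_start ns k1" using 2 by (intro block_start_mono) simp
    then show False using block_start_Suc[OF assms(2)] assms by simp
  qed
qed

lemma unshuffles_zero_at_block_start:
  assumes s: "\<sigma> \<in> unshuffles ns" and sN: "sum_list ns = Suc N"
  shows "\<exists>k<length ns. 0 < ns!k \<and> \<sigma> (block_start ns k) = 0"
proof -
  have p: "\<sigma> permutes {..<Suc N}" using s sN by (simp add: unshuffles_def)
  obtain i where i: "i < Suc N" "\<sigma> i = 0"
    using permutes_surj[OF p] permutes_in_image[OF p]
    by (metis lessThan_iff permutes_inverses(1)[OF p] permutes_inv[OF p] zero_less_Suc)
  obtain k where k: "k < length ns" "block_start ns k \<le> i" "i < block_start ns k + ns!k"
    using block_containing[of i ns] i sN by auto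
  have "i = block_start ns k"
  proof (rule ccontr)
    assume "i \<noteq> block_start ns k"
    then have "\<sigma> (block_start ns k) < \<sigma> i"
      using k s by (intro strict_mono_onD[of "{block_start ns k..<block_start ns k + ns!k}" \<sigma>]) (auto simp: unshuffles_def)
    then show False using i by simp
  qed
  then show ?thesis using k i by (intro exI[of _ k]) auto
qed

text \<open>An unshuffle is determined by the block start it maps to \<open>0\<close> together with an unshuffle of
  the shape with that block shortened; the two signs differ by \<open>(-1)^block_start\<close>, the sign of
  a cycle.\<close>

lemma sum_unshuffles_by_block_start:
  assumes "sum_list ns = Suc N"
  shows "(\<Sum>\<sigma>\<in>unshuffles ns. g \<sigma>) =
    (\<Sum>k | k < length ns \<and> 0 < ns!k. \<Sum>\<sigma> | \<sigma> \<in> unshuffles ns \<and> \<sigma> (block_start ns k) = 0. g \<sigma>)"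
proof -
  let ?K = "{k. k < length ns \<and> 0 < ns!k}"
  let ?S = "\<lambda>k. {\<sigma>. \<sigma> \<in> unshuffles ns \<and> \<sigma> (block_start ns k) = 0}"
  have cover: "unshuffles ns = (\<Union>k\<in>?K. ?S k)"
    using unshuffles_zero_at_block_start[OF _ assms] by blast
  have disjoint: "?S i \<inter> ?S j = {}" if "i \<in> ?K" "j \<in> ?K" "i \<noteq> j" for i j
  proof -
    have "\<sigma> (block_start ns i) \<noteq> \<sigma> (block_start ns j)" if "\<sigma> \<in> unshuffles ns" for \<sigma>
      using that block_start_inj[of i ns j] \<open>i \<in> ?K\<close> \<open>j \<in> ?K\<close> \<open>i \<noteq> j\<close>
      by (auto simp: unshuffles_def dest: permutes_inj injD)
    then have "\<sigma> \<notin> ?S j" if "\<sigma> \<in> ?S i" for \<sigma>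
      using that by (metis (mono_tags, lifting) mem_Collect_eq)
    then show ?thesis by blast
  qed
  have "(\<Sum>\<sigma>\<in>unshuffles ns. g \<sigma>) = (\<Sum>\<sigma>\<in>(\<Union>k\<in>?K. ?S k). g \<sigma>)"
    by (rule arg_cong[OF cover])
  also have "\<dots> = (\<Sum>k\<in>?K. \<Sum>\<sigma>\<in>?S k. g \<sigma>)"
    using disjoint by (intro sum.UNION_disjoint) (auto intro: finite_subset[OF _ finite_unshuffles])
  finally show ?thesis .
qed

lemma sum_unshuffles_block_start_zero:
  assumes k: "k < length ns" "0 < ns!k"
  shows "(\<Sum>\<sigma> | \<sigma> \<in> unshuffles ns \<and> \<sigma> (block_start ns k) = 0. F (sign \<sigma>) (blocks \<sigma> ns (u#us)))
    = (\<Sum>\<tau>\<in>unshuffles (ns[k := ns!k - 1]).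
         F ((-1)^block_start ns k * sign \<tau>) ((blocks \<tau> (ns[k := ns!k - 1]) us)[k := u # blocks \<tau> (ns[k := ns!k - 1]) us ! k]))"
proof -
  let ?m = "block_start ns k" and ?ns' = "ns[k := ns!k - 1]"
  define N where "N = sum_list ?ns'"
  have sN: "sum_list ns = Suc N" using sum_list_update_nat[OF k(1), of "ns!k - 1"] k(2) by (simp add: N_def)
  have mN: "?m \<le> N" using block_start_add_le_sum_list[OF k(1)] sN k(2) by simp
  have "(\<Sum>\<sigma> | \<sigma> \<in> unshuffles ns \<and> \<sigma> ?m = 0. F (sign \<sigma>) (blocks \<sigma> ns (u#us)))
      = (\<Sum>\<tau>\<in>unshuffles ?ns'. F (sign (perm_insert ?m \<tau>)) (blocks (perm_insert ?m \<tau>) ns (u#us)))"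
  proof (rule sum.reindex_bij_witness[of _ "perm_insert ?m" "perm_remove ?m"])
    fix \<sigma> assume "\<sigma> \<in> {\<sigma>. \<sigma> \<in> unshuffles ns \<and> \<sigma> ?m = 0}"
    then have s: "\<sigma> \<in> unshuffles ns" "\<sigma> ?m = 0" by auto
    then have p: "\<sigma> permutes {..<Suc N}" using sN by (simp add: unshuffles_def)
    show ins_r: "perm_insert ?m (perm_remove ?m \<sigma>) = \<sigma>" by (rule perm_insert_remove[OF p s(2)])
    then show "F (sign (perm_insert ?m (perm_remove ?m \<sigma>))) (blocks (perm_insert ?m (perm_remove ?m \<sigma>)) ns (u#us))
        = F (sign \<sigma>) (blocks \<sigma> ns (u#us))" by simp
    have "perm_remove ?m \<sigma> permutes {..<sum_list ?ns'}"
      unfolding N_def[symmetric] by (rule perm_remove_permutes[OF p s(2) mN])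
    then show "perm_remove ?m \<sigma> \<in> unshuffles ?ns'"
      using perm_insert_in_unshuffles_iff[OF k] ins_r s(1) by metis
  next
    fix \<tau> assume t: "\<tau> \<in> unshuffles ?ns'"
    show "perm_remove ?m (perm_insert ?m \<tau>) = \<tau>" by (rule perm_remove_insert)
    have "\<tau> permutes {..<sum_list ?ns'}" using t by (simp add: unshuffles_def)
    then show "perm_insert ?m \<tau> \<in> {\<sigma>. \<sigma> \<in> unshuffles ns \<and> \<sigma> ?m = 0}"
      using perm_insert_in_unshuffles_iff[OF k] t by (simp add: perm_insert_def)
  qed
  also have "\<dots> = (\<Sum>\<tau>\<in>unshuffles ?ns'. F ((-1)^?m * sign \<tau>) ((blocks \<tau> ?ns' us)[k := u # blocks \<tau> ?ns' us ! k]))"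
  proof (rule sum.cong[OF refl])
    fix \<tau> assume "\<tau> \<in> unshuffles ?ns'"
    then have "\<tau> permutes {..<N}" by (simp add: unshuffles_def N_def)
    show "F (sign (perm_insert ?m \<tau>)) (blocks (perm_insert ?m \<tau>) ns (u#us))
        = F ((-1)^?m * sign \<tau>) ((blocks \<tau> ?ns' us)[k := u # blocks \<tau> ?ns' us ! k])"
      unfolding sign_perm_insert[OF \<open>\<tau> permutes {..<N}\<close> mN] blocks_perm_insert[OF k] ..
  qed
  finally show ?thesis .
qed

lemma sum_unshuffles_eq_unshuffle_sum:
  fixes F :: "int \<Rightarrow> 'a list list \<Rightarrow> 'b::comm_monoid_add"
  shows "length us = sum_list ns \<Longrightarrow>
    (\<Sum>\<sigma>\<in>unshuffles ns. F (sign \<sigma>) (blocks \<sigma> ns us)) = unshuffle_sum ns us F"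
proof (induction us arbitrary: ns F)
  case Nil
  then have "sum_list ns = 0" by simp
  then have empty: "{..<sum_list ns} = {}" by (simp only: lessThan_0)
  have "unshuffles ns = {id}"
    unfolding unshuffles_def empty permutes_empty by (auto intro: strict_mono_onI)
  moreover have "\<forall>n\<in>set ns. n = 0" using Nil by simp
  moreover have "blocks id ns ([]::'a list) = replicate (length ns) []"
    using Nil by (intro nth_equalityI) (auto simp: blocks_def)
  ultimately show ?case by (simp add: id_def)
next
  case (Cons u us)
  then have sN: "sum_list ns = Suc (length us)" by simp
  have "(\<Sum>\<sigma>\<in>unshuffles ns. F (sign \<sigma>) (blocks \<sigma> ns (u#us))) =
      (\<Sum>k | k < length ns \<and> 0 < ns!k. unshuffle_sum (ns[k := ns!k - 1]) us
         (\<lambda>s Vs. F ((-1)^block_start ns k * s) (Vs[k := u # Vs!k])))"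
    unfolding sum_unshuffles_by_block_start[OF sN]
  proof (intro sum.cong refl)
    fix k assume "k \<in> {k. k < length ns \<and> 0 < ns!k}"
    then have k: "k < length ns" "0 < ns!k" by simp_all
    then have "length us = sum_list (ns[k := ns!k - 1])"
      using sum_list_update_nat[OF k(1), of "ns!k - 1"] sN by simp
    then show "(\<Sum>\<sigma> | \<sigma> \<in> unshuffles ns \<and> \<sigma> (block_start ns k) = 0. F (sign \<sigma>) (blocks \<sigma> ns (u#us)))
        = unshuffle_sum (ns[k := ns!k - 1]) us (\<lambda>s Vs. F ((-1)^block_start ns k * s) (Vs[k := u # Vs!k]))"
      unfolding sum_unshuffles_block_start_zero[OF k]
      by (rule Cons.IH[where F="\<lambda>s Vs. F ((-1)^block_start ns k * s) (Vs[k := u # Vs!k])"])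
  qed
  also have "\<dots> = unshuffle_sum ns (u#us) F"
    by (simp add: sum.inter_filter[symmetric] Collect_conj_eq lessThan_def)
  finally show ?case .
qed

lemma unshuffle_sum_three_blocks:
  "unshuffle_sum [a,b,c] w F = unshuffle_sum3 a b c w (\<lambda>s A B C. F s [A,B,C])"
proof (induction w arbitrary: a b c F)
  case Nil then show ?case by (simp add: unshuffle_sum3.simps)
next
  case (Cons u w)
  show ?case
    by (simp add: unshuffle_sum3.simps numeral_3_eq_3 lessThan_Suc block_start_def Cons.IH add.commute)
qed

lemma unshuffle3_eq_unshuffles: "unshuffle3 a b c = unshuffles [a,b,c]"
  by (auto simp: unshuffle3_def unshuffles_def numeral_3_eq_3 less_Suc_eq block_start_def
      atLeast0LessThan add.assoc)

lemma unshuffle2_eq_unshuffle3: "unshuffle2 a b = unshuffle3 0 a b"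
  by (simp add: unshuffle2_def unshuffle3_def atLeast0LessThan)

lemma sum_unshuffle3_eq_unshuffle_sum3:
  fixes F :: "int \<Rightarrow> 'a list \<Rightarrow> 'a list \<Rightarrow> 'a list \<Rightarrow> 'b::ab_group_add"
  assumes "length us = a + b + c"
  shows "(\<Sum>\<sigma>\<in>unshuffle3 a b c. F (sign \<sigma>) (map (\<lambda>i. us ! \<sigma> i) [0..<a])
       (map (\<lambda>i. us ! \<sigma> i) [a..<a+b]) (map (\<lambda>i. us ! \<sigma> i) [a+b..<a+b+c]))
    = unshuffle_sum3 a b c us F"
proof -
  have "blocks \<sigma> [a,b,c] us = [map (\<lambda>i. us ! \<sigma> i) [0..<a], map (\<lambda>i. us ! \<sigma> i) [a..<a+b],
      map (\<lambda>i. us ! \<sigma> i) [a+b..<a+b+c]]" for \<sigma>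
    by (simp add: blocks_def numeral_3_eq_3 block_start_def upt_rec)
  then have "(\<Sum>\<sigma>\<in>unshuffle3 a b c. F (sign \<sigma>) (map (\<lambda>i. us ! \<sigma> i) [0..<a])
       (map (\<lambda>i. us ! \<sigma> i) [a..<a+b]) (map (\<lambda>i. us ! \<sigma> i) [a+b..<a+b+c]))
     = (\<Sum>\<sigma>\<in>unshuffles [a,b,c]. (\<lambda>s Vs. F s (Vs!0) (Vs!1) (Vs!2)) (sign \<sigma>) (blocks \<sigma> [a,b,c] us))"
    unfolding unshuffle3_eq_unshuffles by simp
  also have "\<dots> = unshuffle_sum [a,b,c] us (\<lambda>s Vs. F s (Vs!0) (Vs!1) (Vs!2))"
    by (rule sum_unshuffles_eq_unshuffle_sum) (use assms in simp)
  also have "\<dots> = unshuffle_sum3 a b c us F"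
    by (simp add: unshuffle_sum_three_blocks)
  finally show ?thesis .
qed

lemma sum_unshuffle3_ad_term:
  assumes "length us = a + 1 + c"
  shows "(\<Sum>\<sigma>\<in>unshuffle3 a 1 c. scale (of_int (sign \<sigma>))
      (P (ad_star br (Q (map (\<lambda>i. us ! \<sigma> i) [0..<a])) (us ! \<sigma> a) # map (\<lambda>i. us ! \<sigma> i) [a+1..<a+1+c])))
    = unshuffle_sum3 a 1 c us (\<lambda>s A V B. scale (of_int s) (P (ad_star br (Q A) (hd V) # B)))"
  using sum_unshuffle3_eq_unshuffle_sum3[OF assms,
      of "\<lambda>s A V B. scale (of_int s) (P (ad_star br (Q A) (hd V) # B))"]
  by simp

lemma hbr_eq_unshuffle_sum3:
  assumes "length us = m + n"
  shows "hbr scale br n m P Q us =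
      (if n = 0 then 0 else unshuffle_sum3 m 1 (n-1) us
         (\<lambda>s A V B. scale (of_int s) (P (ad_star br (Q A) (hd V) # B))))
    - scale ((-1)^(m*n)) (if m = 0 then 0 else unshuffle_sum3 n 1 (m-1) us
         (\<lambda>s A V B. scale (of_int s) (Q (ad_star br (P A) (hd V) # B))))
    + scale ((-1)^(m*n)) (unshuffle_sum3 0 n m us
         (\<lambda>s _ A B. scale (of_int s) (br (P A) (Q B))))"
proof -
  let ?u = "\<lambda>\<sigma> is. map (\<lambda>i. us ! \<sigma> i) is"
  have "(\<Sum>\<sigma>\<in>unshuffle3 m 1 (n - 1). scale (of_int (sign \<sigma>))
        (P (ad_star br (Q (?u \<sigma> [0..<m])) (us ! \<sigma> m) # ?u \<sigma> [m+1..<m+n])))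
     = unshuffle_sum3 m 1 (n-1) us (\<lambda>s A V B. scale (of_int s) (P (ad_star br (Q A) (hd V) # B)))"
    if "0 < n"
  proof -
    have e: "m + 1 + (n - 1) = m + n" using that by simp
    show ?thesis
      using sum_unshuffle3_ad_term[where a=m and c="n - 1" and P=P and Q=Q, unfolded e, OF assms] .
  qed
  moreover have "(\<Sum>\<sigma>\<in>unshuffle3 n 1 (m - 1). scale (of_int (sign \<sigma>))
        (Q (ad_star br (P (?u \<sigma> [0..<n])) (us ! \<sigma> n) # ?u \<sigma> [n+1..<m+n])))
     = unshuffle_sum3 n 1 (m-1) us (\<lambda>s A V B. scale (of_int s) (Q (ad_star br (P A) (hd V) # B)))"
    if "0 < m"
  proof -
    have e: "n + 1 + (m - 1) = m + n" using that by simp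
    show ?thesis
      using sum_unshuffle3_ad_term[where a=n and c="m - 1" and P=Q and Q=P, unfolded e, OF assms] .
  qed
  moreover have "(\<Sum>\<sigma>\<in>unshuffle2 n m. scale (of_int (sign \<sigma>))
        (br (P (?u \<sigma> [0..<n])) (Q (?u \<sigma> [n..<n+m]))))
     = unshuffle_sum3 0 n m us (\<lambda>s _ A B. scale (of_int s) (br (P A) (Q B)))"
    unfolding unshuffle2_eq_unshuffle3
    using sum_unshuffle3_eq_unshuffle_sum3[of us 0 n m "\<lambda>s _ A B. scale (of_int s) (br (P A) (Q B))"] assms
    by (simp add: add.commute)
  ultimately show ?thesis
    unfolding hbr_def Let_def by (cases "n = 0"; cases "m = 0") auto
qed

section \<open>Lie algebras, duals and \<^const>\<open>Psi\<close>\<close>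

locale lie_alg =
  fixes scale :: "'k::field \<Rightarrow> 'g::ab_group_add \<Rightarrow> 'g" and br :: "'g \<Rightarrow> 'g \<Rightarrow> 'g"
  assumes lie: "lie_algebra scale br"
begin

sublocale vector_space scale
  using lie by (simp add: lie_algebra_def)

lemma linear_br_left: "Vector_Spaces.linear scale scale (\<lambda>x. br x y)"
  using lie by (simp add: lie_algebra_def)

lemma linear_br_right: "Vector_Spaces.linear scale scale (br x)"
  using lie by (simp add: lie_algebra_def)

lemma br_add_left: "br (x + y) z = br x z + br y z"
  using linear_br_left[of z] unfolding Vector_Spaces.linear_iff by blast

lemma br_add_right: "br z (x + y) = br z x + br z y"
  using linear_br_right[of z] unfolding Vector_Spaces.linear_iff by blast

lemma br_scale_left: "br (scale c x) y = scale c (br x y)"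
  using linear_br_left[of y] unfolding Vector_Spaces.linear_iff by blast

lemma br_scale_right: "br y (scale c x) = scale c (br y x)"
  using linear_br_right[of y] unfolding Vector_Spaces.linear_iff by blast

lemma br_sum_left: "br (\<Sum>i\<in>I. f i) y = (\<Sum>i\<in>I. br (f i) y)"
  using module_hom.sum[OF linear_iff_module_hom[THEN iffD1, OF linear_br_left[of y]]] .

lemma br_sum_right: "br y (\<Sum>i\<in>I. f i) = (\<Sum>i\<in>I. br y (f i))"
  using module_hom.sum[OF linear_iff_module_hom[THEN iffD1, OF linear_br_right[of y]]] .

lemma br_self: "br x x = 0"
  using lie by (simp add: lie_algebra_def)

lemma br_antisym: "br x y = - br y x"
proof -
  have "0 = br (x + y) (x + y)" by (simp add: br_self)
  also have "\<dots> = br x x + br y x + (br x y + br y y)" by (simp only: br_add_left br_add_right)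
  also have "\<dots> = br x y + br y x" by (simp add: br_self)
  finally show ?thesis by (subst eq_neg_iff_add_eq_0) (rule sym)
qed

lemma dual_add: "dual_elem scale u \<Longrightarrow> u (x + y) = u x + u y"
  unfolding dual_elem_def Vector_Spaces.linear_iff by blast

lemma dual_scale: "dual_elem scale u \<Longrightarrow> u (scale c x) = c * u x"
  unfolding dual_elem_def Vector_Spaces.linear_iff by blast

lemma dual_zero: "dual_elem scale u \<Longrightarrow> u 0 = 0"
  using dual_scale[of u 0 0] by simp

lemma dual_neg: "dual_elem scale u \<Longrightarrow> u (- x) = - u x"
  using dual_scale[of u "-1" x] by simp

lemma dual_diff: "dual_elem scale u \<Longrightarrow> u (x - y) = u x - u y"
  using dual_add[of u x "- y"] dual_neg[of u y] by simp

lemma dual_sum: "dual_elem scale u \<Longrightarrow> u (\<Sum>i\<in>I. f i) = (\<Sum>i\<in>I. u (f i))"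
  by (induction I rule: infinite_finite_induct) (simp_all add: dual_zero dual_add)

lemma vector_space_field: "vector_space ((*) :: 'k \<Rightarrow> 'k \<Rightarrow> 'k)"
  by unfold_locales (auto simp: algebra_simps)

lemma exists_dual_nonzero:
  assumes "x \<noteq> 0"
  shows "\<exists>\<eta>. dual_elem scale \<eta> \<and> \<eta> x \<noteq> 0"
proof -
  interpret pair: vector_space_pair scale "(*) :: 'k \<Rightarrow> 'k \<Rightarrow> 'k"
    using vector_space_axioms vector_space_field by (simp add: vector_space_pair_def)
  have independent: "\<not> dependent {x}"
    using independent_insert[of x "{}"] assms by (simp add: span_empty independent_empty)
  define \<eta> where "\<eta> = pair.construct {x} (\<lambda>_. 1)"
  have "dual_elem scale \<eta>"
    unfolding dual_elem_def \<eta>_def by (rule pair.linear_construct[OF independent])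
  moreover have "\<eta> x = 1"
    unfolding \<eta>_def by (rule pair.construct_basis[OF independent]) simp
  ultimately show ?thesis by auto
qed

lemma dual_separates:
  assumes "\<And>\<eta>. dual_elem scale \<eta> \<Longrightarrow> \<eta> x = \<eta> y"
  shows "x = y"
proof (rule ccontr)
  assume "x \<noteq> y"
  then obtain \<eta> where "dual_elem scale \<eta>" "\<eta> (x - y) \<noteq> 0"
    using exists_dual_nonzero[of "x - y"] by auto
  then show False using assms by (simp add: dual_diff)
qed

lemma Psi_eqI:
  assumes "\<And>\<eta>. dual_elem scale \<eta> \<Longrightarrow> \<eta> y = pair P (us @ [\<eta>])"
  shows "Psi scale P us = y"
  unfolding Psi_def
proof (rule the_equality)
  fix z assume "\<forall>\<eta>. dual_elem scale \<eta> \<longrightarrow> \<eta> z = pair P (us @ [\<eta>])"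
  then show "z = y" using assms by (intro dual_separates) auto
qed (use assms in blast)

text \<open>\<^const>\<open>Psi\<close> of a single decomposable: the covector in the last slot of the determinant
  is expanded.\<close>

definition psi_dec :: "'g list \<Rightarrow> ('g \<Rightarrow> 'k) list \<Rightarrow> 'g" where
  "psi_dec X W = scale ((-1)^length W)
     (\<Sum>k<length X. scale ((-1)^k * det_expand (remove_nth k X) W) (X!k))"

definition psi_expl :: "('k, 'g) mvec \<Rightarrow> ('g \<Rightarrow> 'k) list \<Rightarrow> 'g" where
  "psi_expl P W = (\<Sum>a<length P. scale (fst (P!a)) (psi_dec (snd (P!a)) W))"

lemma eval_psi_dec:
  "dual_elem scale \<eta> \<Longrightarrow> \<eta> (psi_dec X W) = (-1)^length W * det_expand X (\<eta> # W)"
  by (simp add: psi_dec_def det_expand.simps(2) dual_scale dual_sum algebra_simps)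

lemma eval_psi_expl:
  "dual_elem scale \<eta> \<Longrightarrow> \<eta> (psi_expl P W) = (\<Sum>a<length P. fst (P!a) * \<eta> (psi_dec (snd (P!a)) W))"
  by (simp add: psi_expl_def dual_sum dual_scale)

lemma pair_eq_sum: "pair P us = (\<Sum>a<length P. fst (P!a) * det_expand (snd (P!a)) us)"
  unfolding pair_def det_pair_eq_det_expand by (simp add: sum_list_sum_nth atLeast0LessThan)

lemma Psi_eq_psi_expl: "Psi scale P = psi_expl P"
proof
  fix W
  show "Psi scale P W = psi_expl P W"
    by (rule Psi_eqI)
       (simp add: eval_psi_expl eval_psi_dec pair_eq_sum det_expand_snoc)
qed

end

section \<open>The bracket of decomposables\<close>

context lie_alg
begin

lemma eval_br_psi_dec_left:
  assumes "dual_elem scale v"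
  shows "v (br (psi_dec Y A) x) =
    (-1)^length A * (\<Sum>j<length Y. (-1)^j * det_expand (remove_nth j Y) A * v (br (Y!j) x))"
  using assms
  by (simp add: psi_dec_def br_scale_left br_sum_left dual_scale dual_sum sum_distrib_left algebra_simps)

lemma eval_br_psi_dec_right:
  assumes "dual_elem scale v"
  shows "v (br x (psi_dec Y A)) =
    (-1)^length A * (\<Sum>j<length Y. (-1)^j * det_expand (remove_nth j Y) A * v (br x (Y!j)))"
  using assms
  by (simp add: psi_dec_def br_scale_right br_sum_right dual_scale dual_sum sum_distrib_left algebra_simps)

lemma eval_br_psi_dec:
  assumes "dual_elem scale \<eta>"
  shows "\<eta> (br (psi_dec X A) (psi_dec Y B)) = (-1)^(length A + length B) *
     (\<Sum>i<length X. \<Sum>j<length Y. (-1)^(i+j) * \<eta> (br (X!i) (Y!j))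
        * det_expand (remove_nth i X) A * det_expand (remove_nth j Y) B)"
  using assms
  by (simp add: eval_br_psi_dec_left eval_br_psi_dec_right sum_distrib_left power_add algebra_simps)

lemma eval_psi_dec_ad_left:
  assumes \<eta>: "dual_elem scale \<eta>" and v: "dual_elem scale v"
  shows "\<eta> (psi_dec X (ad_star br (psi_dec Y A) v # B)) = - ((-1)^(Suc (length B) + length A)) *
     (\<Sum>i<length X. \<Sum>j<length Y. (-1)^(i+j) * v (br (X!i) (Y!j))
        * det_expand (remove_nth i X) (\<eta>#B) * det_expand (remove_nth j Y) A)"
proof -
  let ?a = "ad_star br (psi_dec Y A) v"
  have "\<eta> (psi_dec X (?a # B)) = - ((-1)^Suc (length B) * det_expand X (?a # \<eta> # B))"
    using \<eta> by (simp add: eval_psi_dec det_expand_swap[of X \<eta>])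
  also have "det_expand X (?a # \<eta> # B) =
      (\<Sum>i<length X. (-1)^i * ?a (X!i) * det_expand (remove_nth i X) (\<eta>#B))"
    by (rule det_expand.simps(2))
  also have "\<dots> = (\<Sum>i<length X. (-1)^i * ((-1)^length A *
      (\<Sum>j<length Y. (-1)^j * det_expand (remove_nth j Y) A * v (br (X!i) (Y!j))))
      * det_expand (remove_nth i X) (\<eta>#B))"
    using v by (simp add: ad_star_def eval_br_psi_dec_left dual_neg sum_negf br_antisym[of "Y!_"])
  finally show ?thesis
    by (simp add: sum_distrib_left sum_distrib_right power_add algebra_simps sum_negf)
qed

lemma eval_psi_dec_ad_right:
  assumes \<eta>: "dual_elem scale \<eta>" and v: "dual_elem scale v"
  shows "\<eta> (psi_dec Y (ad_star br (psi_dec X A) v # B)) = (-1)^(Suc (length B) + length A) *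
     (\<Sum>i<length X. \<Sum>j<length Y. (-1)^(i+j) * v (br (X!i) (Y!j))
        * det_expand (remove_nth i X) A * det_expand (remove_nth j Y) (\<eta>#B))"
proof -
  let ?a = "ad_star br (psi_dec X A) v"
  have "\<eta> (psi_dec Y (?a # B)) = - ((-1)^Suc (length B) * det_expand Y (?a # \<eta> # B))"
    using \<eta> by (simp add: eval_psi_dec det_expand_swap[of Y \<eta>])
  also have "det_expand Y (?a # \<eta> # B) =
      (\<Sum>j<length Y. (-1)^j * ?a (Y!j) * det_expand (remove_nth j Y) (\<eta>#B))"
    by (rule det_expand.simps(2))
  also have "\<dots> = (\<Sum>j<length Y. (-1)^j * (- ((-1)^length A *
      (\<Sum>i<length X. (-1)^i * det_expand (remove_nth i X) A * v (br (X!i) (Y!j)))))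
      * det_expand (remove_nth j Y) (\<eta>#B))"
    using v by (simp add: ad_star_def eval_br_psi_dec_left)
  also have "- ((-1)^Suc (length B) * \<dots>) = (-1)^(Suc (length B) + length A) *
     (\<Sum>j<length Y. \<Sum>i<length X. (-1)^(i+j) * v (br (X!i) (Y!j))
        * det_expand (remove_nth i X) A * det_expand (remove_nth j Y) (\<eta>#B))"
    by (simp add: sum_distrib_left sum_distrib_right power_add algebra_simps sum_negf)
  finally show ?thesis by (subst (asm) sum.swap)
qed


lemma sum_bracket_terms:
  assumes \<eta>: "dual_elem scale \<eta>"
  shows "(-1)^(p+q) * (\<Sum>i<length X. \<Sum>j<length Y. (-1)^(i+j) * unshuffle_sum3 0 p q us (\<lambda>s _ A B.
            of_int s * \<eta> (br (X!i) (Y!j)) * det_expand (remove_nth i X) A * det_expand (remove_nth j Y) B))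
    = unshuffle_sum3 0 p q us (\<lambda>s _ A B. of_int s * \<eta> (br (psi_dec X A) (psi_dec Y B)))"
proof -
  have "(-1)^(p+q) * (\<Sum>i<length X. \<Sum>j<length Y. (-1)^(i+j) * unshuffle_sum3 0 p q us (\<lambda>s _ A B.
            of_int s * \<eta> (br (X!i) (Y!j)) * det_expand (remove_nth i X) A * det_expand (remove_nth j Y) B))
    = unshuffle_sum3 0 p q us (\<lambda>s _ A B. \<Sum>i<length X. \<Sum>j<length Y. (-1)^(p+q) * (-1)^(i+j) *
        (of_int s * \<eta> (br (X!i) (Y!j)) * det_expand (remove_nth i X) A * det_expand (remove_nth j Y) B))"
    by (rule unshuffle_sum3_sum2)
  also have "\<dots> = unshuffle_sum3 0 p q us (\<lambda>s _ A B. of_int s * \<eta> (br (psi_dec X A) (psi_dec Y B)))"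
    by (intro unshuffle_sum3_cong)
       (simp add: eval_br_psi_dec[OF \<eta>] sum_distrib_left power_add algebra_simps)
  finally show ?thesis .
qed

lemma sum_ad_left_terms:
  assumes \<eta>: "dual_elem scale \<eta>" and us: "\<forall>u\<in>set us. dual_elem scale u" and "0 < p"
  shows "(-1)^(p+q) * (\<Sum>i<length X. \<Sum>j<length Y. (-1)^(i+j) * unshuffle_sum3 1 (p-1) q us (\<lambda>s V A B.
            of_int s * hd V (br (X!i) (Y!j)) * det_expand (remove_nth i X) (\<eta>#A) * det_expand (remove_nth j Y) B))
    = - ((-1)^(p*q) * unshuffle_sum3 q 1 (p-1) us (\<lambda>s A V B.
            of_int s * \<eta> (psi_dec X (ad_star br (psi_dec Y A) (hd V) # B))))"
proof -
  have "(-1)^(p+q) * (\<Sum>i<length X. \<Sum>j<length Y. (-1)^(i+j) * unshuffle_sum3 1 (p-1) q us (\<lambda>s V A B.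
            of_int s * hd V (br (X!i) (Y!j)) * det_expand (remove_nth i X) (\<eta>#A) * det_expand (remove_nth j Y) B))
    = unshuffle_sum3 q 1 (p-1) us (\<lambda>s B V A. \<Sum>i<length X. \<Sum>j<length Y. (-1)^(p+q) * (-1)^(i+j) *
        (of_int ((-1)^(q*(1+(p-1))) * s) * hd V (br (X!i) (Y!j)) * det_expand (remove_nth i X) (\<eta>#A)
          * det_expand (remove_nth j Y) B))"
    unfolding unshuffle_sum3_sum2 by (rule unshuffle_sum3_rotate)
  also have "\<dots> = unshuffle_sum3 q 1 (p-1) us (\<lambda>s A V B. - ((-1)^(p*q) *
      (of_int s * \<eta> (psi_dec X (ad_star br (psi_dec Y A) (hd V) # B)))))"
  proof (rule unshuffle_sum3_cong)
    fix s and A V B :: "('g \<Rightarrow> 'k) list"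
    assume l: "length A = q" "length V = 1" "length B = p - 1" and "set V \<subseteq> set us"
    then have v: "dual_elem scale (hd V)" using us by (cases V) auto
    have p: "1 + (p - 1) = p" "Suc (p - 1) = p" using \<open>0 < p\<close> by auto
    show "(\<Sum>i<length X. \<Sum>j<length Y. (-1)^(p+q) * (-1)^(i+j) * (of_int ((-1)^(q*(1+(p-1))) * s)
          * hd V (br (X!i) (Y!j)) * det_expand (remove_nth i X) (\<eta>#B) * det_expand (remove_nth j Y) A))
        = - ((-1)^(p*q) * (of_int s * \<eta> (psi_dec X (ad_star br (psi_dec Y A) (hd V) # B))))"
      unfolding eval_psi_dec_ad_left[OF \<eta> v] l(1) l(3) p
      by (simp add: sum_distrib_left power_add algebra_simps sum_negf)
  qed
  finally show ?thesis by (simp add: unshuffle_sum3_cmult unshuffle_sum3_neg)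
qed

lemma sum_ad_right_terms:
  assumes \<eta>: "dual_elem scale \<eta>" and us: "\<forall>u\<in>set us. dual_elem scale u" and "0 < q"
  shows "(-1)^(p+q) * (\<Sum>i<length X. \<Sum>j<length Y. (-1)^(i+j) * unshuffle_sum3 1 p (q-1) us (\<lambda>s V A B.
            of_int s * hd V (br (X!i) (Y!j)) * det_expand (remove_nth i X) A * det_expand (remove_nth j Y) (\<eta>#B)))
    = (-1)^p * unshuffle_sum3 p 1 (q-1) us (\<lambda>s A V B.
            of_int s * \<eta> (psi_dec Y (ad_star br (psi_dec X A) (hd V) # B)))"
proof -
  have "(-1)^(p+q) * (\<Sum>i<length X. \<Sum>j<length Y. (-1)^(i+j) * unshuffle_sum3 1 p (q-1) us (\<lambda>s V A B.
            of_int s * hd V (br (X!i) (Y!j)) * det_expand (remove_nth i X) A * det_expand (remove_nth j Y) (\<eta>#B)))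
    = unshuffle_sum3 p 1 (q-1) us (\<lambda>s A V B. \<Sum>i<length X. \<Sum>j<length Y. (-1)^(p+q) * (-1)^(i+j) *
        (of_int ((-1)^(1*p) * s) * hd V (br (X!i) (Y!j)) * det_expand (remove_nth i X) A
          * det_expand (remove_nth j Y) (\<eta>#B)))"
    unfolding unshuffle_sum3_sum2 by (rule unshuffle_sum3_swap12)
  also have "\<dots> = unshuffle_sum3 p 1 (q-1) us (\<lambda>s A V B. (-1)^p *
      (of_int s * \<eta> (psi_dec Y (ad_star br (psi_dec X A) (hd V) # B))))"
  proof (rule unshuffle_sum3_cong)
    fix s and A V B :: "('g \<Rightarrow> 'k) list"
    assume l: "length A = p" "length V = 1" "length B = q - 1" and "set V \<subseteq> set us"
    then have v: "dual_elem scale (hd V)" using us by (cases V) auto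
    have q: "Suc (q - 1) = q" using \<open>0 < q\<close> by auto
    show "(\<Sum>i<length X. \<Sum>j<length Y. (-1)^(p+q) * (-1)^(i+j) * (of_int ((-1)^(1*p) * s)
          * hd V (br (X!i) (Y!j)) * det_expand (remove_nth i X) A * det_expand (remove_nth j Y) (\<eta>#B)))
        = (-1)^p * (of_int s * \<eta> (psi_dec Y (ad_star br (psi_dec X A) (hd V) # B)))"
      unfolding eval_psi_dec_ad_right[OF \<eta> v] l(1) l(3) q
      by (simp add: sum_distrib_left power_add algebra_simps)
  qed
  finally show ?thesis by (simp add: unshuffle_sum3_cmult)
qed


lemma eval_hbr:
  assumes \<eta>: "dual_elem scale \<eta>" and "length us = m + n"
  shows "\<eta> (hbr scale br n m F G us) =
      (if n = 0 then 0 else unshuffle_sum3 m 1 (n-1) us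
         (\<lambda>s A V B. of_int s * \<eta> (F (ad_star br (G A) (hd V) # B))))
    - (-1)^(m*n) * (if m = 0 then 0 else unshuffle_sum3 n 1 (m-1) us
         (\<lambda>s A V B. of_int s * \<eta> (G (ad_star br (F A) (hd V) # B))))
    + (-1)^(m*n) * unshuffle_sum3 0 n m us (\<lambda>s _ A B. of_int s * \<eta> (br (F A) (G B)))"
  unfolding hbr_eq_unshuffle_sum3[OF assms(2)]
  by (simp add: unshuffle_sum3_hom[of \<eta>, OF dual_add[OF \<eta>] dual_zero[OF \<eta>]]
      dual_add[OF \<eta>] dual_diff[OF \<eta>] dual_scale[OF \<eta>] dual_zero[OF \<eta>])

lemma signed_sum_det_expand_bracket:
  assumes \<eta>: "dual_elem scale \<eta>" and us: "\<forall>u\<in>set us. dual_elem scale u"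
    and X: "length X = Suc p" and Y: "length Y = Suc q"
  shows "(-1)^(p+q) * (\<Sum>i<length X. \<Sum>j<length Y. (-1)^(i+j) *
       det_expand (br (X!i) (Y!j) # remove_nth i X @ remove_nth j Y) (\<eta> # us)) =
      unshuffle_sum3 0 p q us (\<lambda>s _ A B. of_int s * \<eta> (br (psi_dec X A) (psi_dec Y B)))
    + (-1)^(p*q) * (if p = 0 then 0 else unshuffle_sum3 q 1 (p-1) us (\<lambda>s A V B.
         of_int s * \<eta> (psi_dec X (ad_star br (psi_dec Y A) (hd V) # B))))
    - (if q = 0 then 0 else unshuffle_sum3 p 1 (q-1) us (\<lambda>s A V B.
         of_int s * \<eta> (psi_dec Y (ad_star br (psi_dec X A) (hd V) # B))))"
    (is "_ * ?S = _")
proof -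
  define T0 where "T0 i j = unshuffle_sum3 0 p q us (\<lambda>s _ A B.
      of_int s * \<eta> (br (X!i) (Y!j)) * det_expand (remove_nth i X) A * det_expand (remove_nth j Y) B)" for i j
  define L where "L i j = unshuffle_sum3 1 (p-1) q us (\<lambda>s V A B.
      of_int s * hd V (br (X!i) (Y!j)) * det_expand (remove_nth i X) (\<eta>#A) * det_expand (remove_nth j Y) B)" for i j
  define R where "R i j = unshuffle_sum3 1 p (q-1) us (\<lambda>s V A B.
      of_int s * hd V (br (X!i) (Y!j)) * det_expand (remove_nth i X) A * det_expand (remove_nth j Y) (\<eta>#B))" for i j
  have expand: "det_expand (br (X!i) (Y!j) # remove_nth i X @ remove_nth j Y) (\<eta> # us) =
      T0 i j - (if 0 < p then L i j else 0) + (if 0 < q then (-1)^Suc p * R i j else 0)"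
    if "i < length X" "j < length Y" for i j
    using that X Y unfolding T0_def L_def R_def by (intro det_expand_Cons_append) simp_all
  have split: "?S = (\<Sum>i<length X. \<Sum>j<length Y. (-1)^(i+j) * T0 i j)
    - (if 0 < p then \<Sum>i<length X. \<Sum>j<length Y. (-1)^(i+j) * L i j else 0)
    + (if 0 < q then (-1)^Suc p * (\<Sum>i<length X. \<Sum>j<length Y. (-1)^(i+j) * R i j) else 0)"
  proof -
    have "?S = (\<Sum>i<length X. \<Sum>j<length Y. (-1)^(i+j) * T0 i j
         - (if 0 < p then (-1)^(i+j) * L i j else 0)
         + (if 0 < q then (-1)^Suc p * ((-1)^(i+j) * R i j) else 0))"
      by (intro sum.cong refl) (simp add: expand algebra_simps)
    then show ?thesis
      by (cases "0 < p"; cases "0 < q") (simp_all add: sum.distrib sum_subtractf sum_distrib_left sum_negf)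
  qed
  show ?thesis
    unfolding split
    using sum_bracket_terms[OF \<eta>, where p=p and q=q and X=X and Y=Y and us=us]
      sum_ad_left_terms[OF \<eta> us, where p=p and q=q and X=X and Y=Y]
      sum_ad_right_terms[OF \<eta> us, where p=p and q=q and X=X and Y=Y]
    unfolding T0_def L_def R_def
    by (cases "p = 0"; cases "q = 0") (simp_all add: algebra_simps)
qed

lemma eval_hbr_psi_dec:
  assumes \<eta>: "dual_elem scale \<eta>" and us: "\<forall>u\<in>set us. dual_elem scale u"
    and X: "length X = Suc p" and Y: "length Y = Suc q" and "length us = p + q"
  shows "\<eta> (hbr scale br p q (psi_dec X) (psi_dec Y) us) = (-1)^(p*q) * (-1)^(p+q) *
    (\<Sum>i<length X. \<Sum>j<length Y. (-1)^(i+j) *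
       det_expand (br (X!i) (Y!j) # remove_nth i X @ remove_nth j Y) (\<eta> # us))"
  unfolding mult.assoc[of "(-1)^(p*q)"] signed_sum_det_expand_bracket[OF \<eta> us X Y]
  using \<open>length us = p + q\<close>
  by (simp add: eval_hbr[OF \<eta>] mult.commute[of q p] distrib_left right_diff_distrib algebra_simps)


lemma ad_star_sum:
  assumes "dual_elem scale v"
  shows "ad_star br (\<Sum>b\<in>I. scale (d b) (z b)) v = (\<lambda>y. \<Sum>b\<in>I. d b * ad_star br (z b) v y)"
  using assms by (simp add: ad_star_def br_sum_left br_scale_left dual_sum dual_scale sum_negf)

lemma eval_psi_expl_ad:
  assumes \<eta>: "dual_elem scale \<eta>" and v: "dual_elem scale v"
  shows "\<eta> (psi_expl P (ad_star br (psi_expl Q A) v # B)) = (\<Sum>a<length P. \<Sum>b<length Q.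
    fst (P!a) * fst (Q!b) * \<eta> (psi_dec (snd (P!a)) (ad_star br (psi_dec (snd (Q!b)) A) v # B)))"
proof -
  have "ad_star br (psi_expl Q A) v =
      (\<lambda>y. \<Sum>b<length Q. fst (Q!b) * ad_star br (psi_dec (snd (Q!b)) A) v y)"
    unfolding psi_expl_def by (rule ad_star_sum[OF v])
  then show ?thesis
    by (simp add: eval_psi_expl[OF \<eta>] eval_psi_dec[OF \<eta>] det_expand_Cons_Cons_sum
        sum_distrib_left algebra_simps)
qed

lemma eval_br_psi_expl:
  assumes "dual_elem scale \<eta>"
  shows "\<eta> (br (psi_expl P A) (psi_expl Q B)) = (\<Sum>a<length P. \<Sum>b<length Q.
    fst (P!a) * fst (Q!b) * \<eta> (br (psi_dec (snd (P!a)) A) (psi_dec (snd (Q!b)) B)))"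
  using assms
  by (simp add: psi_expl_def br_sum_left br_sum_right br_scale_left br_scale_right dual_sum
      dual_scale sum_distrib_left mult.left_commute, subst sum.swap, simp add: mult.assoc)

lemma unshuffle_sum3_sum_sum:
  "unshuffle_sum3 a b c w (\<lambda>s A V B. \<Sum>x<m. \<Sum>y<n. (d x y :: 'k) * F x y s A V B)
     = (\<Sum>x<m. \<Sum>y<n. d x y * unshuffle_sum3 a b c w (F x y))"
  by (simp add: unshuffle_sum3_sum unshuffle_sum3_cmult)

lemma eval_hbr_psi_expl:
  assumes \<eta>: "dual_elem scale \<eta>" and us: "\<forall>u\<in>set us. dual_elem scale u" and "length us = p + q"
  shows "\<eta> (hbr scale br p q (psi_expl P) (psi_expl Q) us) = (\<Sum>a<length P. \<Sum>b<length Q.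
    fst (P!a) * fst (Q!b) * \<eta> (hbr scale br p q (psi_dec (snd (P!a))) (psi_dec (snd (Q!b))) us))"
proof -
  let ?X = "\<lambda>a. psi_dec (snd (P!a))" and ?Y = "\<lambda>b. psi_dec (snd (Q!b))"
  have dual_hd: "dual_elem scale (hd V)" if "length V = 1" "set V \<subseteq> set us" for V
    using that us by (cases V) auto
  have left: "unshuffle_sum3 q 1 (p-1) us
      (\<lambda>s A V B. of_int s * \<eta> (psi_expl P (ad_star br (psi_expl Q A) (hd V) # B)))
    = (\<Sum>a<length P. \<Sum>b<length Q. fst (P!a) * fst (Q!b) * unshuffle_sum3 q 1 (p-1) us
      (\<lambda>s A V B. of_int s * \<eta> (?X a (ad_star br (?Y b A) (hd V) # B))))"
    unfolding unshuffle_sum3_sum_sum[symmetric]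
    by (intro unshuffle_sum3_cong)
       (simp add: eval_psi_expl_ad[OF \<eta> dual_hd] sum_distrib_left algebra_simps)
  have right: "unshuffle_sum3 p 1 (q-1) us
      (\<lambda>s A V B. of_int s * \<eta> (psi_expl Q (ad_star br (psi_expl P A) (hd V) # B)))
    = (\<Sum>a<length P. \<Sum>b<length Q. fst (P!a) * fst (Q!b) * unshuffle_sum3 p 1 (q-1) us
      (\<lambda>s A V B. of_int s * \<eta> (?Y b (ad_star br (?X a A) (hd V) # B))))"
    unfolding unshuffle_sum3_sum_sum[symmetric]
    by (intro unshuffle_sum3_cong)
       (simp add: eval_psi_expl_ad[OF \<eta> dual_hd] sum_distrib_left algebra_simps sum.swap[of _ "{..<length Q}"])
  have bracket: "unshuffle_sum3 0 p q us (\<lambda>s _ A B. of_int s * \<eta> (br (psi_expl P A) (psi_expl Q B)))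
    = (\<Sum>a<length P. \<Sum>b<length Q. fst (P!a) * fst (Q!b) * unshuffle_sum3 0 p q us
      (\<lambda>s _ A B. of_int s * \<eta> (br (?X a A) (?Y b B))))"
    unfolding unshuffle_sum3_sum_sum[symmetric]
    by (intro unshuffle_sum3_cong) (simp add: eval_br_psi_expl[OF \<eta>] sum_distrib_left algebra_simps)
  have "length us = q + p" using \<open>length us = p + q\<close> by simp
  show ?thesis
    unfolding eval_hbr[OF \<eta> \<open>length us = q + p\<close>] left right bracket
    by (cases "p = 0"; cases "q = 0")
       (simp_all add: sum_distrib_left sum.distrib sum_subtractf algebra_simps)
qed

lemma eval_scaled_hbr_psi_dec:
  assumes \<eta>: "dual_elem scale \<eta>" and us: "\<forall>u\<in>set us. dual_elem scale u"
    and "length X = Suc p" "length Y = Suc q" "length us = p + q"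
  shows "\<eta> (scale ((-1)^(p*q)) (hbr scale br p q (psi_dec X) (psi_dec Y) us)) = pair (gerst_dec br X Y) (us @ [\<eta>])"
proof -
  have "pair (gerst_dec br X Y) (us @ [\<eta>]) = (-1)^(p+q) * (\<Sum>i<length X. \<Sum>j<length Y. (-1)^(i+j) *
     det_expand (br (X!i) (Y!j) # remove_nth i X @ remove_nth j Y) (\<eta> # us))"
    unfolding pair_gerst_dec using \<open>length us = p + q\<close>
    by (simp add: det_expand_snoc sum_distrib_left algebra_simps)
  then show ?thesis
    by (simp add: dual_scale[OF \<eta>] eval_hbr_psi_dec[OF assms] mult.assoc)
qed

lemma Psi_gerst:
  assumes P: "is_mvec (p + 1) P" and Q: "is_mvec (q + 1) Q"
    and us: "\<forall>u\<in>set us. dual_elem scale u" and "length us = p + q"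
  shows "Psi scale (gerst br P Q) us = scale ((-1)^(p*q)) (hbr scale br p q (Psi scale P) (Psi scale Q) us)"
proof (rule Psi_eqI)
  fix \<eta> assume \<eta>: "dual_elem scale \<eta>"
  have lengths: "length (snd (P!a)) = Suc p" "length (snd (Q!b)) = Suc q"
    if "a < length P" "b < length Q" for a b
    using P Q that by (simp_all add: is_mvec_def)
  have "\<eta> (scale ((-1)^(p*q)) (hbr scale br p q (psi_expl P) (psi_expl Q) us)) =
      (\<Sum>a<length P. \<Sum>b<length Q. fst (P!a) * fst (Q!b) *
         \<eta> (scale ((-1)^(p*q)) (hbr scale br p q (psi_dec (snd (P!a))) (psi_dec (snd (Q!b))) us)))"
    using \<open>length us = p + q\<close>
    by (simp add: dual_scale[OF \<eta>] eval_hbr_psi_expl[OF \<eta> us] sum_distrib_left mult.left_commute)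
  also have "\<dots> = (\<Sum>a<length P. \<Sum>b<length Q. fst (P!a) * fst (Q!b) *
      pair (gerst_dec br (snd (P!a)) (snd (Q!b))) (us @ [\<eta>]))"
    using lengths \<open>length us = p + q\<close>
    by (intro sum.cong refl) (simp add: eval_scaled_hbr_psi_dec[OF \<eta> us])
  also have "\<dots> = pair (gerst br P Q) (us @ [\<eta>])"
    by (rule pair_gerst[symmetric])
  finally show "\<eta> (scale ((-1)^(p*q)) (hbr scale br p q (Psi scale P) (Psi scale Q) us)) =
      pair (gerst br P Q) (us @ [\<eta>])"
    by (simp add: Psi_eq_psi_expl)
qed

end

theorem proposition7p2:
  fixes scale :: "'k::field \<Rightarrow> 'g::ab_group_add \<Rightarrow> 'g"
    and br :: "'g \<Rightarrow> 'g \<Rightarrow> 'g"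
    and r P Q :: "('k, 'g) mvec"
    and p q :: nat
  assumes lie: "lie_algebra scale br"
    and r2: "is_mvec 2 r"
    and rr: "mvec_zero scale 3 (gerst br r r)"
    and P: "is_mvec (p + 1) P"
    and Q: "is_mvec (q + 1) Q"
  shows "(\<forall>us. length us = p + q \<longrightarrow> (\<forall>u\<in>set us. dual_elem scale u) \<longrightarrow>
            Psi scale (gerst br P Q) us
              = scale ((-1) ^ (p * q)) (hbr scale br p q (Psi scale P) (Psi scale Q) us))
       \<and> (\<forall>us. length us = 1 + p \<longrightarrow> (\<forall>u\<in>set us. dual_elem scale u) \<longrightarrow>
            Psi scale (gerst br r P) us
              = scale ((-1) ^ p) (hbr scale br 1 p (Psi scale r) (Psi scale P) us))"
proof -
  interpret lie_alg scale br
    by (rule lie_alg.intro[OF lie])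
  have "is_mvec (1 + 1) r"
    using r2 by (simp add: numeral_2_eq_2)
  then show ?thesis
    using Psi_gerst[OF P Q] Psi_gerst[of 1 r p P] P by auto
qed

end
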